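(* Let $\mathcal C$ be a left autonomous monoidal category and $T$ a bimonad on $\mathcal C$. The following are equivalent: (i) $T$ has a left unary antipode; (ii) $T$ has a left binary antipode; (iii) $T$ is a left Hopf monad. (The analogous statement holds for right autonomous categories, right unary/binary antipodes and right Hopf monads.)
   Context: Monoidal categories are strict. A bimonad on $\mathcal C$ is a monad $(T,\mu,\eta)$ with comonoidal structure $T_2(X,Y)\colon T(X\otimes Y)\to TX\otimes TY$, $T_0\colon T\mathbb 1\to\mathbb 1$ such that $\mu,\eta$ are comonoidal. $T$ is a left Hopf monad if $H^l_{X,Y}=(TX\otimes\mu_Y)T_2(X,TY)\colon T(X\otimes TY)\to TX\otimes TY$ is invertible for all $X,Y$. Left autonomous: every $X$ has a left dual ${}^\vee X$ with $\mathrm{ev}_X\colon{}^\vee X\otimes X\to\mathbb 1$, $\mathrm{coev}_X\colon\mathbb 1\to X\otimes{}^\vee X$; ${}^\vee f$ denotes the dual morphism. Such a category is left closed with $[X,Y]^l=Y\otimes{}^\vee X$, evaluation $\mathrm{ev}^X_Y=Y\otimes\mathrm{ev}_X$, and coevaluation $\mathrm{coev}^X_Y=Y\otimes\mathrm{coev}_X$. A left unary antipode is a natural transformation $\mathfrak s^l_X\colon T({}^\vee TX)\to{}^\vee X$ with $T_0T(\mathrm{ev}_X)T({}^\vee\eta_X\otimes X)=\mathrm{ev}_{TX}(\mathfrak s^l_{TX}T({}^\vee\mu_X)\otimes TX)T_2({}^\vee TX,X)$ and $(\eta_X\otimes{}^\vee X)\mathrm{coev}_XT_0=(\mu_X\otimes\mathfrak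 s^l_X)T_2(TX,{}^\vee TX)T(\mathrm{coev}_{TX})$. A left binary antipode is a natural transformation $s^l_{X,Y}\colon T[TX,Y]^l\to[X,TY]^l$ with (1) $T\big(\mathrm{ev}^X_Y([\eta_X,Y]^l\otimes X)\big)=\mathrm{ev}^{TX}_{TY}\big(s^l_{TX,Y}T[\mu_X,Y]^l\otimes TX\big)T_2([TX,Y]^l,X)$; (2) $[X,TY\otimes\eta_X]^l\,\mathrm{coev}^X_{TY}=[X,(TY\otimes\mu_X)T_2(Y,TX)]^l\,s^l_{X,Y\otimes TX}\,T(\mathrm{coev}^{TX}_Y)$. *)

theory Defs
  imports Main
begin

text \<open>A (small-or-large, set-based) category with objects of type 'o and arrows of type 'm.
  cComp g f denotes the composite g o f (first f, then g).  cTen is the tensor on objects,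
  cTenA the tensor on arrows, cUnit the unit object.  cDual X is the chosen left dual of X,
  with evaluation cEv X : cDual X (x) X -> 1 and coevaluation cCoev X : 1 -> X (x) cDual X.\<close>

record ('o, 'm) moncat =
  cObj  :: "'o set"
  cArr  :: "'m set"
  cDom  :: "'m \<Rightarrow> 'o"
  cCod  :: "'m \<Rightarrow> 'o"
  cComp :: "'m \<Rightarrow> 'm \<Rightarrow> 'm"
  cId   :: "'o \<Rightarrow> 'm"
  cTen  :: "'o \<Rightarrow> 'o \<Rightarrow> 'o"
  cTenA :: "'m \<Rightarrow> 'm \<Rightarrow> 'm"
  cUnit :: "'o"

record ('o, 'm) lacat = "('o, 'm) moncat" +
  cDual :: "'o \<Rightarrow> 'o"
  cEv   :: "'o \<Rightarrow> 'm"
  cCoev :: "'o \<Rightarrow> 'm"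

definition hom :: "('o, 'm, 'z) moncat_scheme \<Rightarrow> 'm \<Rightarrow> 'o \<Rightarrow> 'o \<Rightarrow> bool" where
  "hom C f X Y \<longleftrightarrow> f \<in> cArr C \<and> cDom C f = X \<and> cCod C f = Y"

definition wl :: "('o, 'm, 'z) moncat_scheme \<Rightarrow> 'o \<Rightarrow> 'm \<Rightarrow> 'm" where
  "wl C X f = cTenA C (cId C X) f"

definition wr :: "('o, 'm, 'z) moncat_scheme \<Rightarrow> 'm \<Rightarrow> 'o \<Rightarrow> 'm" where
  "wr C f X = cTenA C f (cId C X)"

definition strict_monoidal_category :: "('o, 'm, 'z) moncat_scheme \<Rightarrow> bool" where
  "strict_monoidal_category C \<longleftrightarrow>
     (\<forall>f\<in>cArr C. cDom C f \<in> cObj C \<and> cCod C f \<in> cObj C) \<and>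
     (\<forall>X\<in>cObj C. hom C (cId C X) X X) \<and>
     (\<forall>f\<in>cArr C. \<forall>g\<in>cArr C. cCod C f = cDom C g \<longrightarrow>
         hom C (cComp C g f) (cDom C f) (cCod C g)) \<and>
     (\<forall>f\<in>cArr C. cComp C (cId C (cCod C f)) f = f \<and> cComp C f (cId C (cDom C f)) = f) \<and>
     (\<forall>f\<in>cArr C. \<forall>g\<in>cArr C. \<forall>h\<in>cArr C. cCod C f = cDom C g \<longrightarrow> cCod C g = cDom C h \<longrightarrow>
         cComp C h (cComp C g f) = cComp C (cComp C h g) f) \<and>
     cUnit C \<in> cObj C \<and>
     (\<forall>X\<in>cObj C. \<forall>Y\<in>cObj C. cTen C X Y \<in> cObj C) \<and>
     (\<forall>f\<in>cArr C. \<forall>g\<in>cArr C.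
         hom C (cTenA C f g) (cTen C (cDom C f) (cDom C g)) (cTen C (cCod C f) (cCod C g))) \<and>
     (\<forall>X\<in>cObj C. \<forall>Y\<in>cObj C. cTenA C (cId C X) (cId C Y) = cId C (cTen C X Y)) \<and>
     (\<forall>f\<in>cArr C. \<forall>g\<in>cArr C. \<forall>f'\<in>cArr C. \<forall>g'\<in>cArr C.
         cCod C f = cDom C g \<longrightarrow> cCod C f' = cDom C g' \<longrightarrow>
         cTenA C (cComp C g f) (cComp C g' f') = cComp C (cTenA C g g') (cTenA C f f')) \<and>
     (\<forall>X\<in>cObj C. \<forall>Y\<in>cObj C. \<forall>Z\<in>cObj C. cTen C (cTen C X Y) Z = cTen C X (cTen C Y Z)) \<and>
     (\<forall>f\<in>cArr C. \<forall>g\<in>cArr C. \<forall>h\<in>cArr C. cTenA C (cTenA C f g) h = cTenA C f (cTenA C g h)) \<and>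
     (\<forall>X\<in>cObj C. cTen C (cUnit C) X = X \<and> cTen C X (cUnit C) = X) \<and>
     (\<forall>f\<in>cArr C. cTenA C (cId C (cUnit C)) f = f \<and> cTenA C f (cId C (cUnit C)) = f)"

definition left_autonomous :: "('o, 'm, 'z) lacat_scheme \<Rightarrow> bool" where
  "left_autonomous C \<longleftrightarrow> strict_monoidal_category C \<and>
     (\<forall>X\<in>cObj C. cDual C X \<in> cObj C \<and>
        hom C (cEv C X) (cTen C (cDual C X) X) (cUnit C) \<and>
        hom C (cCoev C X) (cUnit C) (cTen C X (cDual C X)) \<and>
        cComp C (wl C X (cEv C X)) (wr C (cCoev C X) X) = cId C X \<and>
        cComp C (wr C (cEv C X) (cDual C X)) (wl C (cDual C X) (cCoev C X)) = cId C (cDual C X))"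

definition dualm :: "('o, 'm, 'z) lacat_scheme \<Rightarrow> 'm \<Rightarrow> 'm" where
  "dualm C f =
     cComp C (wr C (cEv C (cCod C f)) (cDual C (cDom C f)))
       (cComp C (cTenA C (cId C (cDual C (cCod C f))) (cTenA C f (cId C (cDual C (cDom C f)))))
          (wl C (cDual C (cCod C f)) (cCoev C (cDom C f))))"

definition ihom :: "('o, 'm, 'z) lacat_scheme \<Rightarrow> 'o \<Rightarrow> 'o \<Rightarrow> 'o" where
  "ihom C X Y = cTen C Y (cDual C X)"

definition ihomm :: "('o, 'm, 'z) lacat_scheme \<Rightarrow> 'm \<Rightarrow> 'm \<Rightarrow> 'm" where
  "ihomm C f g = cTenA C g (dualm C f)"

record ('o, 'm) bimonad_data =
  TO  :: "'o \<Rightarrow> 'o"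
  TA  :: "'m \<Rightarrow> 'm"
  Mu  :: "'o \<Rightarrow> 'm"
  Eta :: "'o \<Rightarrow> 'm"
  T2  :: "'o \<Rightarrow> 'o \<Rightarrow> 'm"
  T0  :: "'m"

definition bimonad :: "('o, 'm, 'z) moncat_scheme \<Rightarrow> ('o, 'm) bimonad_data \<Rightarrow> bool" where
  "bimonad C T \<longleftrightarrow>
     \<comment> \<open>T is an endofunctor\<close>
     (\<forall>X\<in>cObj C. TO T X \<in> cObj C) \<and>
     (\<forall>f\<in>cArr C. hom C (TA T f) (TO T (cDom C f)) (TO T (cCod C f))) \<and>
     (\<forall>X\<in>cObj C. TA T (cId C X) = cId C (TO T X)) \<and>
     (\<forall>f\<in>cArr C. \<forall>g\<in>cArr C. cCod C f = cDom C g \<longrightarrow>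
         TA T (cComp C g f) = cComp C (TA T g) (TA T f)) \<and>
     \<comment> \<open>typing of the structure maps\<close>
     (\<forall>X\<in>cObj C. hom C (Mu T X) (TO T (TO T X)) (TO T X)) \<and>
     (\<forall>X\<in>cObj C. hom C (Eta T X) X (TO T X)) \<and>
     (\<forall>X\<in>cObj C. \<forall>Y\<in>cObj C. hom C (T2 T X Y) (TO T (cTen C X Y)) (cTen C (TO T X) (TO T Y))) \<and>
     hom C (T0 T) (TO T (cUnit C)) (cUnit C) \<and>
     \<comment> \<open>naturality\<close>
     (\<forall>f\<in>cArr C. cComp C (TA T f) (Mu T (cDom C f)) = cComp C (Mu T (cCod C f)) (TA T (TA T f))) \<and>
     (\<forall>f\<in>cArr C. cComp C (TA T f) (Eta T (cDom C f)) = cComp C (Eta T (cCod C f)) f) \<and>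
     (\<forall>f\<in>cArr C. \<forall>g\<in>cArr C.
         cComp C (cTenA C (TA T f) (TA T g)) (T2 T (cDom C f) (cDom C g)) =
         cComp C (T2 T (cCod C f) (cCod C g)) (TA T (cTenA C f g))) \<and>
     \<comment> \<open>monad laws\<close>
     (\<forall>X\<in>cObj C. cComp C (Mu T X) (TA T (Mu T X)) = cComp C (Mu T X) (Mu T (TO T X))) \<and>
     (\<forall>X\<in>cObj C. cComp C (Mu T X) (Eta T (TO T X)) = cId C (TO T X)) \<and>
     (\<forall>X\<in>cObj C. cComp C (Mu T X) (TA T (Eta T X)) = cId C (TO T X)) \<and>
     \<comment> \<open>comonoidal functor laws\<close>
     (\<forall>X\<in>cObj C. \<forall>Y\<in>cObj C. \<forall>Z\<in>cObj C.
         cComp C (wr C (T2 T X Y) (TO T Z)) (T2 T (cTen C X Y) Z) =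
         cComp C (wl C (TO T X) (T2 T Y Z)) (T2 T X (cTen C Y Z))) \<and>
     (\<forall>X\<in>cObj C. cComp C (wr C (T0 T) (TO T X)) (T2 T (cUnit C) X) = cId C (TO T X)) \<and>
     (\<forall>X\<in>cObj C. cComp C (wl C (TO T X) (T0 T)) (T2 T X (cUnit C)) = cId C (TO T X)) \<and>
     \<comment> \<open>mu is comonoidal\<close>
     (\<forall>X\<in>cObj C. \<forall>Y\<in>cObj C.
         cComp C (T2 T X Y) (Mu T (cTen C X Y)) =
         cComp C (cTenA C (Mu T X) (Mu T Y)) (cComp C (T2 T (TO T X) (TO T Y)) (TA T (T2 T X Y)))) \<and>
     cComp C (T0 T) (Mu T (cUnit C)) = cComp C (T0 T) (TA T (T0 T)) \<and>
     \<comment> \<open>eta is comonoidal\<close>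
     (\<forall>X\<in>cObj C. \<forall>Y\<in>cObj C.
         cComp C (T2 T X Y) (Eta T (cTen C X Y)) = cTenA C (Eta T X) (Eta T Y)) \<and>
     cComp C (T0 T) (Eta T (cUnit C)) = cId C (cUnit C)"

definition left_hopf :: "('o, 'm, 'z) moncat_scheme \<Rightarrow> ('o, 'm) bimonad_data \<Rightarrow> bool" where
  "left_hopf C T \<longleftrightarrow>
     (\<forall>X\<in>cObj C. \<forall>Y\<in>cObj C.
        \<exists>g. hom C g (cTen C (TO T X) (TO T Y)) (TO T (cTen C X (TO T Y))) \<and>
            cComp C g (cComp C (wl C (TO T X) (Mu T Y)) (T2 T X (TO T Y))) = cId C (TO T (cTen C X (TO T Y))) \<and>
            cComp C (cComp C (wl C (TO T X) (Mu T Y)) (T2 T X (TO T Y))) g = cId C (cTen C (TO T X) (TO T Y)))"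

definition is_left_unary_antipode ::
  "('o, 'm, 'z) lacat_scheme \<Rightarrow> ('o, 'm) bimonad_data \<Rightarrow> ('o \<Rightarrow> 'm) \<Rightarrow> bool" where
  "is_left_unary_antipode C T s \<longleftrightarrow>
     (\<forall>X\<in>cObj C. hom C (s X) (TO T (cDual C (TO T X))) (cDual C X)) \<and>
     (\<forall>f\<in>cArr C. cComp C (dualm C f) (s (cCod C f)) = cComp C (s (cDom C f)) (TA T (dualm C (TA T f)))) \<and>
     (\<forall>X\<in>cObj C.
        cComp C (T0 T) (cComp C (TA T (cEv C X)) (TA T (wr C (dualm C (Eta T X)) X))) =
        cComp C (cEv C (TO T X))
          (cComp C (wr C (cComp C (s (TO T X)) (TA T (dualm C (Mu T X)))) (TO T X))
             (T2 T (cDual C (TO T X)) X))) \<and>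
     (\<forall>X\<in>cObj C.
        cComp C (wr C (Eta T X) (cDual C X)) (cComp C (cCoev C X) (T0 T)) =
        cComp C (cTenA C (Mu T X) (s X))
          (cComp C (T2 T (TO T X) (cDual C (TO T X))) (TA T (cCoev C (TO T X)))))"

definition has_left_unary_antipode :: "('o, 'm, 'z) lacat_scheme \<Rightarrow> ('o, 'm) bimonad_data \<Rightarrow> bool" where
  "has_left_unary_antipode C T \<longleftrightarrow> (\<exists>s. is_left_unary_antipode C T s)"

definition is_left_binary_antipode ::
  "('o, 'm, 'z) lacat_scheme \<Rightarrow> ('o, 'm) bimonad_data \<Rightarrow> ('o \<Rightarrow> 'o \<Rightarrow> 'm) \<Rightarrow> bool" where
  "is_left_binary_antipode C T s \<longleftrightarrow>
     (\<forall>X\<in>cObj C. \<forall>Y\<in>cObj C. hom C (s X Y) (TO T (ihom C (TO T X) Y)) (ihom C X (TO T Y))) \<and>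
     (\<forall>f\<in>cArr C. \<forall>g\<in>cArr C.
        cComp C (s (cDom C f) (cCod C g)) (TA T (ihomm C (TA T f) g)) =
        cComp C (ihomm C f (TA T g)) (s (cCod C f) (cDom C g))) \<and>
     (\<forall>X\<in>cObj C. \<forall>Y\<in>cObj C.
        TA T (cComp C (wl C Y (cEv C X)) (wr C (ihomm C (Eta T X) (cId C Y)) X)) =
        cComp C (wl C (TO T Y) (cEv C (TO T X)))
          (cComp C (wr C (cComp C (s (TO T X) Y) (TA T (ihomm C (Mu T X) (cId C Y)))) (TO T X))
             (T2 T (ihom C (TO T X) Y) X))) \<and>
     (\<forall>X\<in>cObj C. \<forall>Y\<in>cObj C.
        cComp C (ihomm C (cId C X) (wl C (TO T Y) (Eta T X))) (wl C (TO T Y) (cCoev C X)) =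
        cComp C (ihomm C (cId C X) (cComp C (wl C (TO T Y) (Mu T X)) (T2 T Y (TO T X))))
          (cComp C (s X (cTen C Y (TO T X))) (TA T (wl C Y (cCoev C (TO T X))))))"

definition has_left_binary_antipode :: "('o, 'm, 'z) lacat_scheme \<Rightarrow> ('o, 'm) bimonad_data \<Rightarrow> bool" where
  "has_left_binary_antipode C T \<longleftrightarrow> (\<exists>s. is_left_binary_antipode C T s)"

end

theory Submission
  imports Defs
begin

(* The tool throughout is the duality adjunction: morphisms A (x) X -> B correspond
   bijectively to morphisms A -> B (x) X^v, via "cur" (compose with coev) and its
   inverse "uncur" (compose with ev).  Equations between morphisms into B (x) X^v are
   therefore checked after applying "uncur", where the dual morphisms disappear.

   (i) => (ii):  s_{X,Y} := (TY (x) s_X) o T2(Y, (TX)^v); both axioms follow by coassociativity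
                 and counitality of T2 from the two axioms of s.
   (ii) => (iii): the fusion operator H_{A,B} = (TA (x) mu_B) o T2(A,TB) gets the inverse
                 s^_{TB,A(x)TB} o (T(A (x) TB (x) mu_B^v) o T(A (x) coev_{TB}) (x) TB), where s^ is
                 the uncurried binary antipode; axiom (2) gives H o H^-1 = id and axiom (1),
                 after naturality moves mu_B inside, gives H^-1 o H = id.
   (iii) => (i): s_X := cur(t0 o T(ev_{TX}) o H^{-1}_{(TX)^v, X} o (T((TX)^v) (x) eta_X)). *)

locale left_autonomous_bimonad =
  fixes C :: "('o,'m) lacat" and T :: "('o,'m) bimonad_data"
  assumes autonomous: "left_autonomous C" and is_bimonad: "bimonad C T"
begin

abbreviation ob where "ob X \<equiv> X \<in> cObj C"
abbreviation arr where "arr f \<equiv> f \<in> cArr C"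
abbreviation dm where "dm \<equiv> cDom C"
abbreviation cd where "cd \<equiv> cCod C"
abbreviation cp (infixr "\<cdot>" 55) where "g \<cdot> f \<equiv> cComp C g f"
abbreviation Id where "Id \<equiv> cId C"
abbreviation tno (infixr "\<odot>" 65) where "X \<odot> Y \<equiv> cTen C X Y"
abbreviation tna (infixr "\<otimes>" 65) where "f \<otimes> g \<equiv> cTenA C f g"
abbreviation U where "U \<equiv> cUnit C"
abbreviation D where "D \<equiv> cDual C"
abbreviation ev where "ev \<equiv> cEv C"
abbreviation coev where "coev \<equiv> cCoev C"
abbreviation TT where "TT \<equiv> TO T"
abbreviation Tm where "Tm \<equiv> TA T"
abbreviation mu where "mu \<equiv> Mu T"
abbreviation eta where "eta \<equiv> Eta T"
abbreviation t2 where "t2 \<equiv> T2 T"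
abbreviation t0 where "t0 \<equiv> T0 T"
abbreviation dual where "dual \<equiv> dualm C"

lemma strict: "strict_monoidal_category C" using autonomous left_autonomous_def by blast

named_theorems typing

lemma dom_ob[typing]: "arr f \<Longrightarrow> ob (dm f)"
  using strict unfolding strict_monoidal_category_def hom_def by auto
lemma cod_ob[typing]: "arr f \<Longrightarrow> ob (cd f)"
  using strict unfolding strict_monoidal_category_def hom_def by auto
lemma id_typing[typing]: "ob X \<Longrightarrow> arr (Id X)" "ob X \<Longrightarrow> dm (Id X) = X" "ob X \<Longrightarrow> cd (Id X) = X"
  using strict unfolding strict_monoidal_category_def hom_def by auto
lemma comp_typing[typing]: "arr f \<Longrightarrow> arr g \<Longrightarrow> cd f = dm g \<Longrightarrow> arr (g \<cdot> f)"
  "arr f \<Longrightarrow> arr g \<Longrightarrow> cd f = dm g \<Longrightarrow> dm (g \<cdot> f) = dm f"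
  "arr f \<Longrightarrow> arr g \<Longrightarrow> cd f = dm g \<Longrightarrow> cd (g \<cdot> f) = cd g"
  using strict unfolding strict_monoidal_category_def hom_def by auto
lemma unit_ob[typing]: "ob U"
  using strict unfolding strict_monoidal_category_def hom_def by auto
lemma tensor_ob[typing]: "ob X \<Longrightarrow> ob Y \<Longrightarrow> ob (X \<odot> Y)"
  using strict unfolding strict_monoidal_category_def hom_def by auto
lemma tensor_typing[typing]: "arr f \<Longrightarrow> arr g \<Longrightarrow> arr (f \<otimes> g)"
  "arr f \<Longrightarrow> arr g \<Longrightarrow> dm (f \<otimes> g) = dm f \<odot> dm g"
  "arr f \<Longrightarrow> arr g \<Longrightarrow> cd (f \<otimes> g) = cd f \<odot> cd g"
  using strict unfolding strict_monoidal_category_def hom_def by auto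
lemma tensor_ob_assoc[typing]: "ob X \<Longrightarrow> ob Y \<Longrightarrow> ob Z \<Longrightarrow> (X \<odot> Y) \<odot> Z = X \<odot> (Y \<odot> Z)"
  using strict unfolding strict_monoidal_category_def hom_def by auto
lemma tensor_ob_unit[typing]: "ob X \<Longrightarrow> U \<odot> X = X" "ob X \<Longrightarrow> X \<odot> U = X"
  using strict unfolding strict_monoidal_category_def hom_def by auto

lemma cat_id_left: "arr f \<Longrightarrow> cd f = X \<Longrightarrow> Id X \<cdot> f = f"
  using strict unfolding strict_monoidal_category_def hom_def by auto
lemma cat_id_right: "arr f \<Longrightarrow> dm f = X \<Longrightarrow> f \<cdot> Id X = f"
  using strict unfolding strict_monoidal_category_def hom_def by auto
lemma comp_assoc: "arr f \<Longrightarrow> arr g \<Longrightarrow> arr h \<Longrightarrow> cd f = dm g \<Longrightarrow> cd g = dm h \<Longrightarrow>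
   (h \<cdot> g) \<cdot> f = h \<cdot> g \<cdot> f"
  using strict unfolding strict_monoidal_category_def hom_def by auto
lemma tensor_id: "ob X \<Longrightarrow> ob Y \<Longrightarrow> Id X \<otimes> Id Y = Id (X \<odot> Y)"
  using strict unfolding strict_monoidal_category_def hom_def by auto
lemma interchange: "arr f \<Longrightarrow> arr g \<Longrightarrow> arr f' \<Longrightarrow> arr g' \<Longrightarrow> cd f = dm g \<Longrightarrow> cd f' = dm g' \<Longrightarrow>
   (g \<cdot> f) \<otimes> (g' \<cdot> f') = (g \<otimes> g') \<cdot> (f \<otimes> f')"
  using strict unfolding strict_monoidal_category_def hom_def by auto
lemma tensor_assoc: "arr f \<Longrightarrow> arr g \<Longrightarrow> arr h \<Longrightarrow> (f \<otimes> g) \<otimes> h = f \<otimes> g \<otimes> h"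
  using strict unfolding strict_monoidal_category_def hom_def by auto
lemma tensor_unit: "arr f \<Longrightarrow> Id U \<otimes> f = f" "arr f \<Longrightarrow> f \<otimes> Id U = f"
  using strict unfolding strict_monoidal_category_def hom_def by auto

lemma duality: "ob X \<Longrightarrow> ob (D X)"
  "ob X \<Longrightarrow> arr (ev X)" "ob X \<Longrightarrow> dm (ev X) = D X \<odot> X" "ob X \<Longrightarrow> cd (ev X) = U"
  "ob X \<Longrightarrow> arr (coev X)" "ob X \<Longrightarrow> dm (coev X) = U" "ob X \<Longrightarrow> cd (coev X) = X \<odot> D X"
  "ob X \<Longrightarrow> (Id X \<otimes> ev X) \<cdot> (coev X \<otimes> Id X) = Id X"
  "ob X \<Longrightarrow> (ev X \<otimes> Id (D X)) \<cdot> (Id (D X) \<otimes> coev X) = Id (D X)"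
  using autonomous unfolding left_autonomous_def hom_def wl_def wr_def by auto

lemmas dual_ob_typing[typing] = duality(1-7)
lemmas zig = duality(8) and zag = duality(9)

lemma bimonad_typing[typing]:
  "ob X \<Longrightarrow> ob (TT X)"
  "arr f \<Longrightarrow> arr (Tm f)" "arr f \<Longrightarrow> dm (Tm f) = TT (dm f)" "arr f \<Longrightarrow> cd (Tm f) = TT (cd f)"
  "ob X \<Longrightarrow> arr (mu X)" "ob X \<Longrightarrow> dm (mu X) = TT (TT X)" "ob X \<Longrightarrow> cd (mu X) = TT X"
  "ob X \<Longrightarrow> arr (eta X)" "ob X \<Longrightarrow> dm (eta X) = X" "ob X \<Longrightarrow> cd (eta X) = TT X"
  "ob X \<Longrightarrow> ob Y \<Longrightarrow> arr (t2 X Y)" "ob X \<Longrightarrow> ob Y \<Longrightarrow> dm (t2 X Y) = TT (X \<odot> Y)"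
  "ob X \<Longrightarrow> ob Y \<Longrightarrow> cd (t2 X Y) = TT X \<odot> TT Y"
  "arr t0" "dm t0 = TT U" "cd t0 = U"
  using is_bimonad unfolding bimonad_def hom_def by auto

lemma T_id: "ob X \<Longrightarrow> Tm (Id X) = Id (TT X)"
  using is_bimonad unfolding bimonad_def hom_def by auto
lemma T_comp: "arr f \<Longrightarrow> arr g \<Longrightarrow> cd f = dm g \<Longrightarrow> Tm (g \<cdot> f) = Tm g \<cdot> Tm f"
  using is_bimonad unfolding bimonad_def hom_def by auto
lemma mu_nat: "arr f \<Longrightarrow> Tm f \<cdot> mu (dm f) = mu (cd f) \<cdot> Tm (Tm f)"
  using is_bimonad unfolding bimonad_def hom_def by auto
lemma eta_nat: "arr f \<Longrightarrow> Tm f \<cdot> eta (dm f) = eta (cd f) \<cdot> f"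
  using is_bimonad unfolding bimonad_def hom_def by auto
lemma t2_nat: "arr f \<Longrightarrow> arr g \<Longrightarrow>
   (Tm f \<otimes> Tm g) \<cdot> t2 (dm f) (dm g) = t2 (cd f) (cd g) \<cdot> Tm (f \<otimes> g)"
  using is_bimonad unfolding bimonad_def hom_def by auto
lemma mu_assoc: "ob X \<Longrightarrow> mu X \<cdot> Tm (mu X) = mu X \<cdot> mu (TT X)"
  using is_bimonad unfolding bimonad_def hom_def by auto
lemma mu_eta_T: "ob X \<Longrightarrow> mu X \<cdot> eta (TT X) = Id (TT X)"
  using is_bimonad unfolding bimonad_def hom_def by auto
lemma mu_T_eta: "ob X \<Longrightarrow> mu X \<cdot> Tm (eta X) = Id (TT X)"
  using is_bimonad unfolding bimonad_def hom_def by auto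
lemma t2_coassoc: "ob X \<Longrightarrow> ob Y \<Longrightarrow> ob Z \<Longrightarrow>
   (t2 X Y \<otimes> Id (TT Z)) \<cdot> t2 (X \<odot> Y) Z = (Id (TT X) \<otimes> t2 Y Z) \<cdot> t2 X (Y \<odot> Z)"
  using is_bimonad unfolding bimonad_def wl_def wr_def hom_def by auto
lemma t0_counitL: "ob X \<Longrightarrow> (t0 \<otimes> Id (TT X)) \<cdot> t2 U X = Id (TT X)"
  using is_bimonad unfolding bimonad_def wl_def wr_def hom_def by auto
lemma t0_counitR: "ob X \<Longrightarrow> (Id (TT X) \<otimes> t0) \<cdot> t2 X U = Id (TT X)"
  using is_bimonad unfolding bimonad_def wl_def wr_def hom_def by auto

lemma t2_natL: "arr f \<Longrightarrow> ob Y \<Longrightarrow> (Tm f \<otimes> Id (TT Y)) \<cdot> t2 (dm f) Y = t2 (cd f) Y \<cdot> Tm (f \<otimes> Id Y)"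
  using t2_nat[of f "Id Y"] by (simp add: T_id typing)
lemma t2_natR: "arr g \<Longrightarrow> ob X \<Longrightarrow> (Id (TT X) \<otimes> Tm g) \<cdot> t2 X (dm g) = t2 X (cd g) \<cdot> Tm (Id X \<otimes> g)"
  using t2_nat[of "Id X" g] by (simp add: T_id typing)

lemma comp_extend: "a \<cdot> b = c \<Longrightarrow> arr y \<Longrightarrow> arr b \<Longrightarrow> arr a \<Longrightarrow> cd y = dm b \<Longrightarrow> cd b = dm a \<Longrightarrow>
   a \<cdot> b \<cdot> y = c \<cdot> y"
  by (metis comp_assoc)

lemma comp_extend3: "a \<cdot> b \<cdot> c = d \<Longrightarrow> arr y \<Longrightarrow> arr c \<Longrightarrow> arr b \<Longrightarrow> arr a \<Longrightarrow>
   cd y = dm c \<Longrightarrow> cd c = dm b \<Longrightarrow> cd b = dm a \<Longrightarrow> a \<cdot> b \<cdot> c \<cdot> y = d \<cdot> y"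
  by (metis comp_assoc comp_typing)

lemma interchange_rev: "arr f \<Longrightarrow> arr g \<Longrightarrow> arr f' \<Longrightarrow> arr g' \<Longrightarrow> cd f = dm g \<Longrightarrow> cd f' = dm g' \<Longrightarrow>
   (g \<otimes> g') \<cdot> (f \<otimes> f') = (g \<cdot> f) \<otimes> (g' \<cdot> f')"
  by (simp add: interchange)

lemma interchange_pre: "arr f \<Longrightarrow> arr g \<Longrightarrow> arr f' \<Longrightarrow> arr g' \<Longrightarrow> arr h \<Longrightarrow>
   cd f = dm g \<Longrightarrow> cd f' = dm g' \<Longrightarrow> cd h = dm f \<odot> dm f' \<Longrightarrow>
   (g \<otimes> g') \<cdot> (f \<otimes> f') \<cdot> h = ((g \<cdot> f) \<otimes> (g' \<cdot> f')) \<cdot> h"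
  by (simp add: interchange[symmetric] comp_assoc[symmetric] typing)

lemma slide1: "arr f \<Longrightarrow> arr g \<Longrightarrow> cd g = Y \<Longrightarrow> dm f = X \<Longrightarrow> (f \<otimes> Id Y) \<cdot> (Id X \<otimes> g) = f \<otimes> g"
  by (auto simp add: interchange_rev typing cat_id_left cat_id_right)
lemma slide2: "arr f \<Longrightarrow> arr g \<Longrightarrow> cd f = X \<Longrightarrow> dm g = Y \<Longrightarrow> (Id X \<otimes> g) \<cdot> (f \<otimes> Id Y) = f \<otimes> g"
  by (auto simp add: interchange_rev typing cat_id_left cat_id_right)

lemma comp_tensor_id: "arr f \<Longrightarrow> arr g \<Longrightarrow> cd f = dm g \<Longrightarrow> ob Z \<Longrightarrow>
   (g \<cdot> f) \<otimes> Id Z = (g \<otimes> Id Z) \<cdot> (f \<otimes> Id Z)"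
  by (simp add: interchange_rev typing cat_id_left cat_id_right)
lemma id_tensor_comp: "arr f \<Longrightarrow> arr g \<Longrightarrow> cd f = dm g \<Longrightarrow> ob Z \<Longrightarrow>
   Id Z \<otimes> (g \<cdot> f) = (Id Z \<otimes> g) \<cdot> (Id Z \<otimes> f)"
  by (simp add: interchange_rev typing cat_id_left cat_id_right)
lemma comp_tensor: "arr f \<Longrightarrow> arr g \<Longrightarrow> arr h \<Longrightarrow> cd f = dm g \<Longrightarrow>
   (g \<cdot> f) \<otimes> h = (g \<otimes> h) \<cdot> (f \<otimes> Id (dm h))"
  by (simp add: interchange[symmetric] cat_id_right typing)
lemma tensor_id3: "ob X \<Longrightarrow> ob Y \<Longrightarrow> arr f \<Longrightarrow> Id X \<otimes> Id Y \<otimes> f = Id (X \<odot> Y) \<otimes> f"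
  by (simp add: tensor_assoc[symmetric] tensor_id typing)

lemma tensor_commute: "arr a \<Longrightarrow> arr b \<Longrightarrow>
   (a \<otimes> Id (cd b)) \<cdot> (Id (dm a) \<otimes> b) = (Id (cd a) \<otimes> b) \<cdot> (a \<otimes> Id (dm b))"
  by (simp add: slide1 slide2)

lemma inverse_transport:
  assumes "arr h" "arr h'" "arr k" "arr k'" "arr x" "arr y"
    and "dm h' = cd h" "cd k' = dm k" "cd x = dm h" "dm y = cd k" "cd y = cd h" "dm k = dm x"
    and "h' \<cdot> h = Id (dm h)" "k \<cdot> k' = Id (cd k)" and "h \<cdot> x = y \<cdot> k"
  shows "h' \<cdot> y = x \<cdot> k'"
proof -
  have "h' \<cdot> y = h' \<cdot> (y \<cdot> k) \<cdot> k'"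
    using assms by (simp add: comp_assoc cat_id_right typing)
  also have "\<dots> = h' \<cdot> (h \<cdot> x) \<cdot> k'"
    by (simp only: assms(15))
  also have "\<dots> = (h' \<cdot> h) \<cdot> x \<cdot> k'"
    using assms(1-12) by (simp add: comp_assoc typing)
  also have "\<dots> = x \<cdot> k'"
    using assms by (simp add: cat_id_left typing)
  finally show ?thesis .
qed

text \<open>The two operations are mutually inverse by the snake identities.\<close>

abbreviation cur where "cur A X g \<equiv> (g \<otimes> Id (D X)) \<cdot> (Id A \<otimes> coev X)"
abbreviation uncur where "uncur B X h \<equiv> (Id B \<otimes> ev X) \<cdot> (h \<otimes> Id X)"

lemma uncur_cur: assumes "arr g" "ob A" "ob X" "dm g = A \<odot> X"
  shows "uncur (cd g) X (cur A X g) = g"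
proof -
  have "uncur (cd g) X (cur A X g) = (Id (cd g) \<otimes> ev X)
      \<cdot> (g \<otimes> Id (D X) \<otimes> Id X) \<cdot> (Id A \<otimes> coev X \<otimes> Id X)"
    using assms by (simp add: comp_tensor_id typing tensor_assoc)
  also have "\<dots> = (g \<otimes> ev X) \<cdot> (Id A \<otimes> coev X \<otimes> Id X)"
    using assms by (simp add: tensor_id interchange_pre typing cat_id_left cat_id_right)
  also have "\<dots> = g \<cdot> (Id A \<otimes> Id X \<otimes> ev X) \<cdot> (Id A \<otimes> coev X \<otimes> Id X)"
  proof -
    have "g \<otimes> ev X = (g \<otimes> Id U) \<cdot> (Id (A \<odot> X) \<otimes> ev X)"
      using slide1[of g "ev X" U "A\<odot>X"] assms by (simp add: typing)
    also have "\<dots> = g \<cdot> (Id A \<otimes> Id X \<otimes> ev X)"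
      using assms by (simp add: tensor_unit tensor_id[symmetric] tensor_assoc typing)
    finally have "g \<otimes> ev X = g \<cdot> (Id A \<otimes> Id X \<otimes> ev X)" .
    then show ?thesis using assms by (simp add: comp_assoc typing)
  qed
  also have "\<dots> = g \<cdot> (Id A \<otimes> ((Id X \<otimes> ev X) \<cdot> (coev X \<otimes> Id X)))"
    using assms by (simp add: interchange[symmetric] typing cat_id_left cat_id_right)
  also have "\<dots> = g" using assms by (simp add: zig tensor_id cat_id_right typing)
  finally show ?thesis .
qed

lemma cur_uncur: assumes "arr h" "ob A" "ob B" "ob X" "dm h = A" "cd h = B \<odot> D X"
  shows "cur A X (uncur B X h) = h"
proof -
  have "cur A X (uncur B X h) = (Id B \<otimes> ev X \<otimes> Id (D X))
      \<cdot> (h \<otimes> Id X \<otimes> Id (D X)) \<cdot> (Id A \<otimes> coev X)"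
    using assms by (simp add: comp_tensor_id typing tensor_assoc comp_assoc)
  also have "\<dots> = (Id B \<otimes> ev X \<otimes> Id (D X)) \<cdot> (h \<otimes> coev X)"
    using assms by (simp add: tensor_id slide1 typing)
  also have "\<dots> = (Id B \<otimes> ev X \<otimes> Id (D X))
      \<cdot> (Id B \<otimes> Id (D X) \<otimes> coev X) \<cdot> h"
  proof -
    have "h \<otimes> coev X = (Id (B \<odot> D X) \<otimes> coev X) \<cdot> (h \<otimes> Id U)"
      using slide2[of h "coev X" "B \<odot> D X" U] assms by (simp add: typing)
    also have "\<dots> = (Id B \<otimes> Id (D X) \<otimes> coev X) \<cdot> h"
      using assms by (simp add: tensor_unit tensor_id[symmetric] tensor_assoc typing)
    finally have "h \<otimes> coev X = (Id B \<otimes> Id (D X) \<otimes> coev X) \<cdot> h" .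
    then show ?thesis using assms by simp
  qed
  also have "\<dots> = (Id B \<otimes> ((ev X \<otimes> Id (D X)) \<cdot> (Id (D X) \<otimes> coev X))) \<cdot> h"
    using assms by (simp add: comp_assoc[symmetric] interchange[symmetric] typing cat_id_left)
  also have "\<dots> = h" using assms by (simp add: zag tensor_id cat_id_left typing)
  finally show ?thesis .
qed

lemma uncur_inj: assumes "arr h1" "arr h2" "ob A" "ob B" "ob X" "dm h1 = A" "cd h1 = B \<odot> D X"
  "dm h2 = A" "cd h2 = B \<odot> D X" "uncur B X h1 = uncur B X h2" shows "h1 = h2"
proof -
  have "h1 = cur A X (uncur B X h1)" using cur_uncur[OF assms(1,3,4,5,6,7)] by (rule sym)
  also have "\<dots> = cur A X (uncur B X h2)" by (simp only: assms(10))
  also have "\<dots> = h2" using cur_uncur[OF assms(2,3,4,5,8,9)] .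
  finally show ?thesis .
qed

lemma uncur_precomp: "arr h \<Longrightarrow> arr a \<Longrightarrow> ob X \<Longrightarrow> ob B \<Longrightarrow> cd a = dm h \<Longrightarrow> cd h = B \<odot> D X \<Longrightarrow>
   uncur B X (h \<cdot> a) = uncur B X h \<cdot> (a \<otimes> Id X)"
  by (simp add: comp_tensor_id comp_assoc typing)

lemma uncur_postcomp: assumes "arr h" "arr b" "ob X" "cd h = dm b \<odot> D X"
  shows "uncur (cd b) X ((b \<otimes> Id (D X)) \<cdot> h) = b \<cdot> uncur (dm b) X h"
proof -
  have "uncur (cd b) X ((b \<otimes> Id (D X)) \<cdot> h)
      = ((Id (cd b) \<otimes> ev X) \<cdot> (b \<otimes> Id (D X) \<otimes> Id X)) \<cdot> (h \<otimes> Id X)"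
    using assms by (simp add: comp_tensor_id comp_assoc tensor_assoc typing)
  also have "\<dots> = (b \<otimes> ev X) \<cdot> (h \<otimes> Id X)"
    using assms by (simp add: tensor_id slide2 typing)
  also have "\<dots> = (b \<cdot> (Id (dm b) \<otimes> ev X)) \<cdot> (h \<otimes> Id X)"
  proof -
    have "b \<otimes> ev X = (b \<otimes> Id U) \<cdot> (Id (dm b) \<otimes> ev X)"
      using slide1[of b "ev X" U "dm b"] assms by (simp add: typing)
    then show ?thesis using assms by (simp add: tensor_unit)
  qed
  finally show ?thesis using assms by (simp add: comp_assoc typing)
qed

lemma dual_typing[typing]: "arr f \<Longrightarrow> arr (dual f)" "arr f \<Longrightarrow> dm (dual f) = D (cd f)" "arr f \<Longrightarrow> cd (dual f) = D (dm f)"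
  unfolding dualm_def wl_def wr_def by (simp_all add: typing)

lemma dual_as_cur: "arr f \<Longrightarrow> dual f = cur (D (cd f)) (dm f) (ev (cd f) \<cdot> (Id (D (cd f)) \<otimes> f))"
  unfolding dualm_def wl_def wr_def by (simp add: comp_tensor_id tensor_assoc typing comp_assoc)

lemma ev_dual: "arr f \<Longrightarrow> ev (dm f) \<cdot> (dual f \<otimes> Id (dm f)) = ev (cd f) \<cdot> (Id (D (cd f)) \<otimes> f)"
  using uncur_cur[of "ev (cd f) \<cdot> (Id (D (cd f)) \<otimes> f)" "D (cd f)" "dm f"]
  by (simp add: dual_as_cur[symmetric] typing tensor_unit)

lemma dual_unique: assumes "arr f" "arr d" "dm d = D (cd f)" "cd d = D (dm f)"
  "ev (dm f) \<cdot> (d \<otimes> Id (dm f)) = ev (cd f) \<cdot> (Id (D (cd f)) \<otimes> f)"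
  shows "d = dual f"
  by (rule uncur_inj[of d "dual f" "D (cd f)" U "dm f"])
    (use assms in \<open>simp_all add: typing tensor_unit ev_dual\<close>)

lemma dual_id: "ob X \<Longrightarrow> dual (Id X) = Id (D X)"
  by (rule sym, rule dual_unique) (simp_all add: typing)

lemma dual_comp: assumes "arr f" "arr g" "cd f = dm g"
  shows "dual (g \<cdot> f) = dual f \<cdot> dual g"
proof (rule sym, rule dual_unique)
  let ?X = "dm f" and ?Y = "cd f" and ?Z = "cd g"
  have "ev ?X \<cdot> ((dual f \<cdot> dual g) \<otimes> Id ?X)
      = ev ?X \<cdot> (dual f \<otimes> Id ?X) \<cdot> (dual g \<otimes> Id ?X)"
    using assms by (simp add: comp_tensor_id typing)
  also have "\<dots> = ev ?Y \<cdot> (Id (D ?Y) \<otimes> f) \<cdot> (dual g \<otimes> Id ?X)"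
    using assms by (simp add: comp_extend[OF ev_dual] typing comp_assoc)
  also have "\<dots> = ev ?Y \<cdot> (dual g \<otimes> f)"
    using assms by (simp add: slide2 typing)
  also have "\<dots> = ev ?Y \<cdot> (dual g \<otimes> Id ?Y) \<cdot> (Id (D ?Z) \<otimes> f)"
    using assms by (simp add: slide1 typing)
  also have "\<dots> = ev ?Z \<cdot> (Id (D ?Z) \<otimes> g) \<cdot> (Id (D ?Z) \<otimes> f)"
    using assms by (simp add: comp_extend[OF ev_dual] typing comp_assoc)
  also have "\<dots> = ev ?Z \<cdot> (Id (D ?Z) \<otimes> (g \<cdot> f))"
    using assms by (simp add: id_tensor_comp typing)
  finally show "ev (dm (g \<cdot> f)) \<cdot> ((dual f \<cdot> dual g) \<otimes> Id (dm (g \<cdot> f))) =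
    ev (cd (g \<cdot> f)) \<cdot> (Id (D (cd (g \<cdot> f))) \<otimes> (g \<cdot> f))" using assms by (simp add: typing)
qed (use assms in \<open>simp_all add: typing\<close>)

lemma uncur_coev: "ob B \<Longrightarrow> ob X \<Longrightarrow> uncur (B \<odot> X) X (Id B \<otimes> coev X) = Id (B \<odot> X)"
  by (simp add: tensor_id[symmetric] tensor_assoc interchange_rev zig cat_id_left typing)

lemma uncur_dual: assumes "arr f" "arr h" "ob B" "cd h = B \<odot> D (cd f)"
  shows "uncur B (dm f) ((Id B \<otimes> dual f) \<cdot> h) = uncur B (cd f) h \<cdot> (Id (dm h) \<otimes> f)"
proof -
  have "uncur B (dm f) ((Id B \<otimes> dual f) \<cdot> h)
      = (Id B \<otimes> ev (dm f)) \<cdot> (Id B \<otimes> dual f \<otimes> Id (dm f)) \<cdot> (h \<otimes> Id (dm f))"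
    using assms by (simp add: comp_tensor_id tensor_assoc comp_assoc typing)
  also have "\<dots> = (Id B \<otimes> (ev (dm f) \<cdot> (dual f \<otimes> Id (dm f))))
      \<cdot> (h \<otimes> Id (dm f))"
    using assms by (simp add: interchange_pre cat_id_left typing)
  also have "\<dots> = (Id B \<otimes> (ev (cd f) \<cdot> (Id (D (cd f)) \<otimes> f)))
      \<cdot> (h \<otimes> Id (dm f))"
    using assms by (simp add: ev_dual)
  also have "\<dots> = (Id B \<otimes> ev (cd f)) \<cdot> (Id (B \<odot> D (cd f)) \<otimes> f)
      \<cdot> (h \<otimes> Id (dm f))"
    using assms by (simp add: id_tensor_comp tensor_id3 comp_assoc typing)
  also have "\<dots> = (Id B \<otimes> ev (cd f)) \<cdot> (h \<otimes> f)"
    using assms by (simp add: slide2 typing)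
  also have "\<dots> = (Id B \<otimes> ev (cd f)) \<cdot> (h \<otimes> Id (cd f)) \<cdot> (Id (dm h) \<otimes> f)"
    using assms by (simp add: slide1 typing)
  finally show ?thesis using assms by (simp add: comp_assoc typing)
qed

lemma coev_dual: assumes "arr f"
  shows "(Id (cd f) \<otimes> dual f) \<cdot> coev (cd f) = (f \<otimes> Id (D (dm f))) \<cdot> coev (dm f)"
proof (rule uncur_inj[of _ _ U "cd f" "dm f"])
  have "uncur (cd f) (dm f) ((Id (cd f) \<otimes> dual f) \<cdot> coev (cd f)) =
      uncur (cd f) (cd f) (coev (cd f)) \<cdot> (Id U \<otimes> f)"
    using uncur_dual[of f "coev (cd f)" "cd f"] assms by (simp add: typing)
  also have "\<dots> = f"
    using assms by (simp add: zig tensor_unit cat_id_left typing)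
  also have "\<dots> = uncur (cd f) (dm f) ((f \<otimes> Id (D (dm f))) \<cdot> coev (dm f))"
    using uncur_postcomp[of "coev (dm f)" f "dm f"] assms by (simp add: zig cat_id_right typing)
  finally show "uncur (cd f) (dm f) ((Id (cd f) \<otimes> dual f) \<cdot> coev (cd f)) =
      uncur (cd f) (dm f) ((f \<otimes> Id (D (dm f))) \<cdot> coev (dm f))" .
qed (use assms in \<open>simp_all add: typing\<close>)

definition fusion :: "'o \<Rightarrow> 'o \<Rightarrow> 'm" where
  "fusion A B = (Id (TT A) \<otimes> mu B) \<cdot> t2 A (TT B)"

lemma fusion_typing[typing]: "ob A \<Longrightarrow> ob B \<Longrightarrow> arr (fusion A B)"
  "ob A \<Longrightarrow> ob B \<Longrightarrow> dm (fusion A B) = TT (A \<odot> TT B)"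
  "ob A \<Longrightarrow> ob B \<Longrightarrow> cd (fusion A B) = TT A \<odot> TT B"
  unfolding fusion_def by (simp_all add: typing)

text \<open>Compatibility with the multiplication (from associativity of mu).\<close>

lemma fusion_mu: assumes "ob A" "ob B"
  shows "fusion A B \<cdot> Tm (Id A \<otimes> mu B) = (Id (TT A) \<otimes> mu B) \<cdot> fusion A (TT B)"
proof -
  have "fusion A B \<cdot> Tm (Id A \<otimes> mu B) =
      (Id (TT A) \<otimes> mu B) \<cdot> (Id (TT A) \<otimes> Tm (mu B)) \<cdot> t2 A (TT (TT B))"
    using t2_natR[of "mu B" A] assms unfolding fusion_def by (simp add: typing comp_assoc)
  also have "\<dots> = (Id (TT A) \<otimes> mu B) \<cdot> (Id (TT A) \<otimes> mu (TT B)) \<cdot> t2 A (TT (TT B))"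
    using assms by (simp add: comp_extend[OF interchange_rev] mu_assoc cat_id_left typing)
  finally show ?thesis using assms unfolding fusion_def by (simp add: comp_assoc typing)
qed

lemma fusion_nat_left: assumes "arr f" "ob B"
  shows "fusion (cd f) B \<cdot> Tm (f \<otimes> Id (TT B)) = (Tm f \<otimes> Id (TT B)) \<cdot> fusion (dm f) B"
proof -
  have "fusion (cd f) B \<cdot> Tm (f \<otimes> Id (TT B)) =
      (Id (TT (cd f)) \<otimes> mu B) \<cdot> (Tm f \<otimes> Id (TT (TT B))) \<cdot> t2 (dm f) (TT B)"
    using t2_natL[of f "TT B"] assms unfolding fusion_def by (simp add: typing comp_assoc)
  also have "\<dots> = (Tm f \<otimes> Id (TT B)) \<cdot> fusion (dm f) B"
    using assms unfolding fusion_def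
    by (simp add: cat_id_left cat_id_right typing comp_assoc[symmetric] interchange_rev)
  finally show ?thesis .
qed

lemma fusion_nat_right: assumes "arr g" "ob A"
  shows "fusion A (cd g) \<cdot> Tm (Id A \<otimes> Tm g) = (Id (TT A) \<otimes> Tm g) \<cdot> fusion A (dm g)"
proof -
  have "fusion A (cd g) \<cdot> Tm (Id A \<otimes> Tm g) =
      (Id (TT A) \<otimes> mu (cd g)) \<cdot> (Id (TT A) \<otimes> Tm (Tm g)) \<cdot> t2 A (TT (dm g))"
    using t2_natR[of "Tm g" A] assms unfolding fusion_def by (simp add: typing comp_assoc)
  also have "\<dots> = (Id (TT A) \<otimes> (Tm g \<cdot> mu (dm g))) \<cdot> t2 A (TT (dm g))"
    using assms by (simp add: comp_extend[OF interchange_rev] cat_id_left typing mu_nat)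
  also have "\<dots> = (Id (TT A) \<otimes> Tm g) \<cdot> fusion A (dm g)"
    using assms unfolding fusion_def by (simp add: id_tensor_comp typing comp_assoc)
  finally show ?thesis .
qed

text \<open>Precomposed with T(A \<odot> eta_B), the fusion operator is just T2 (unit law of the monad).\<close>

lemma fusion_eta: assumes "ob A" "ob B"
  shows "fusion A B \<cdot> Tm (Id A \<otimes> eta B) = t2 A B"
proof -
  have "fusion A B \<cdot> Tm (Id A \<otimes> eta B)
      = (Id (TT A) \<otimes> mu B) \<cdot> (Id (TT A) \<otimes> Tm (eta B)) \<cdot> t2 A B"
    using t2_natR[of "eta B" A] assms unfolding fusion_def by (simp add: typing comp_assoc)
  also have "\<dots> = t2 A B"
    using assms by (simp add: comp_extend[OF interchange_rev] cat_id_left mu_T_eta tensor_id typing)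
  finally show ?thesis .
qed

lemma fusion_counit: assumes "ob A"
  shows "(t0 \<otimes> Id (TT A)) \<cdot> fusion U A = mu A"
proof -
  have "(t0 \<otimes> Id (TT A)) \<cdot> fusion U A = (t0 \<otimes> mu A) \<cdot> t2 U (TT A)"
    using assms unfolding fusion_def by (simp add: comp_extend[OF interchange_rev] cat_id_left cat_id_right typing)
  also have "\<dots> = mu A \<cdot> (t0 \<otimes> Id (TT (TT A))) \<cdot> t2 U (TT A)"
  proof -
    have "t0 \<otimes> mu A = (Id U \<otimes> mu A) \<cdot> (t0 \<otimes> Id (TT (TT A)))"
      using slide2[of t0 "mu A" U "TT (TT A)"] assms by (simp add: typing)
    then show ?thesis using assms by (simp add: tensor_unit comp_assoc typing)
  qed
  also have "\<dots> = mu A" using assms by (simp add: t0_counitL cat_id_right typing)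
  finally show ?thesis .
qed

lemma fusion_coassoc: assumes "ob A" "ob B" "ob Z"
  shows "(Id (TT A) \<otimes> fusion B Z) \<cdot> t2 A (B \<odot> TT Z)
      = (t2 A B \<otimes> Id (TT Z)) \<cdot> fusion (A \<odot> B) Z"
proof -
  have "(Id (TT A) \<otimes> fusion B Z) \<cdot> t2 A (B \<odot> TT Z) =
      (Id (TT A) \<otimes> Id (TT B) \<otimes> mu Z) \<cdot> (Id (TT A) \<otimes> t2 B (TT Z)) \<cdot> t2 A (B \<odot> TT Z)"
    using assms unfolding fusion_def by (simp add: id_tensor_comp typing comp_assoc)
  also have "\<dots> = (Id (TT A) \<otimes> Id (TT B) \<otimes> mu Z)
      \<cdot> (t2 A B \<otimes> Id (TT (TT Z))) \<cdot> t2 (A \<odot> B) (TT Z)"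
    using assms by (simp add: t2_coassoc typing)
  also have "\<dots> = (t2 A B \<otimes> mu Z) \<cdot> t2 (A \<odot> B) (TT Z)"
    using assms by (simp add: tensor_id3 slide2 typing comp_assoc[symmetric])
  also have "\<dots> = (t2 A B \<otimes> Id (TT Z)) \<cdot> fusion (A \<odot> B) Z"
    using assms unfolding fusion_def by (simp add: slide1 typing comp_assoc[symmetric])
  finally show ?thesis .
qed

lemma dual_mu_assoc: "ob Z \<Longrightarrow> ob B \<Longrightarrow>
   (Id Z \<otimes> dual (Tm (mu B))) \<cdot> (Id Z \<otimes> dual (mu B)) = (Id Z \<otimes> dual (mu (TT B))) \<cdot> (Id Z \<otimes> dual (mu B))"
  by (simp add: interchange_rev cat_id_left dual_comp[symmetric] mu_assoc typing)

lemma dual_mu_eta: "ob Z \<Longrightarrow> ob B \<Longrightarrow>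
   (Id Z \<otimes> dual (eta (TT B))) \<cdot> (Id Z \<otimes> dual (mu B)) = Id (Z \<odot> D (TT B))"
  by (simp add: interchange_rev cat_id_left dual_comp[symmetric] mu_eta_T dual_id tensor_id typing)

end

locale left_unary_antipode = left_autonomous_bimonad C T
  for C :: "('o, 'm) lacat" and T :: "('o, 'm) bimonad_data" +
  fixes s :: "'o \<Rightarrow> 'm"
  assumes antipode: "is_left_unary_antipode C T s"
begin

lemma s_typing[typing]: "ob X \<Longrightarrow> arr (s X)" "ob X \<Longrightarrow> dm (s X) = TT (D (TT X))" "ob X \<Longrightarrow> cd (s X) = D X"
  using antipode unfolding is_left_unary_antipode_def hom_def by auto
lemma s_nat: "arr f \<Longrightarrow> dual f \<cdot> s (cd f) = s (dm f) \<cdot> Tm (dual (Tm f))"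
  using antipode unfolding is_left_unary_antipode_def by auto
lemma s_ax1: "ob X \<Longrightarrow> t0 \<cdot> Tm (ev X) \<cdot> Tm (dual (eta X) \<otimes> Id X) =
   ev (TT X) \<cdot> ((s (TT X) \<cdot> Tm (dual (mu X))) \<otimes> Id (TT X)) \<cdot> t2 (D (TT X)) X"
  using antipode unfolding is_left_unary_antipode_def wr_def by auto
lemma s_ax2: "ob X \<Longrightarrow>
   (eta X \<otimes> Id (D X)) \<cdot> coev X \<cdot> t0 = (mu X \<otimes> s X) \<cdot> t2 (TT X) (D (TT X)) \<cdot> Tm (coev (TT X))"
  using antipode unfolding is_left_unary_antipode_def wr_def by auto

definition binary_of_unary :: "'o \<Rightarrow> 'o \<Rightarrow> 'm" where
  "binary_of_unary X Y = (Id (TT Y) \<otimes> s X) \<cdot> t2 Y (D (TT X))"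

lemma binary_of_unary_typing[typing]: "ob X \<Longrightarrow> ob Y \<Longrightarrow> arr (binary_of_unary X Y)"
  "ob X \<Longrightarrow> ob Y \<Longrightarrow> dm (binary_of_unary X Y) = TT (Y \<odot> D (TT X))"
  "ob X \<Longrightarrow> ob Y \<Longrightarrow> cd (binary_of_unary X Y) = TT Y \<odot> D X"
  unfolding binary_of_unary_def by (simp_all add: typing)

lemma binary_of_unary_nat: assumes "arr f" "arr g"
  shows "binary_of_unary (dm f) (cd g) \<cdot> Tm (g \<otimes> dual (Tm f))
      = (Tm g \<otimes> dual f) \<cdot> binary_of_unary (cd f) (dm g)"
proof -
  have "binary_of_unary (dm f) (cd g) \<cdot> Tm (g \<otimes> dual (Tm f)) =
     (Id (TT (cd g)) \<otimes> s (dm f)) \<cdot> (Tm g \<otimes> Tm (dual (Tm f))) \<cdot> t2 (dm g) (D (TT (cd f)))"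
    using t2_nat[of g "dual (Tm f)"] assms unfolding binary_of_unary_def by (simp add: typing comp_assoc)
  also have "\<dots> = (Tm g \<otimes> (s (dm f) \<cdot> Tm (dual (Tm f)))) \<cdot> t2 (dm g) (D (TT (cd f)))"
    using assms by (simp add: interchange_pre cat_id_left typing comp_assoc)
  also have "\<dots> = (Tm g \<otimes> (dual f \<cdot> s (cd f))) \<cdot> t2 (dm g) (D (TT (cd f)))"
    using assms by (simp add: s_nat)
  also have "\<dots> = (Tm g \<otimes> dual f) \<cdot> binary_of_unary (cd f) (dm g)"
    using assms unfolding binary_of_unary_def by (simp add: interchange_rev cat_id_right typing comp_assoc[symmetric])
  finally show ?thesis .
qed

text \<open>Axiom (1): coassociativity splits T2 so that axiom 1 of s applies in the second factor,
  and counitality removes the remaining T0.\<close>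

lemma binary_of_unary_ax1: assumes "ob X" "ob Y"
  shows "Tm ((Id Y \<otimes> ev X) \<cdot> ((Id Y \<otimes> dual (eta X)) \<otimes> Id X)) =
    (Id (TT Y) \<otimes> ev (TT X)) \<cdot> ((binary_of_unary (TT X) Y \<cdot> Tm (Id Y \<otimes> dual (mu X))) \<otimes> Id (TT X)) \<cdot> t2 (Y \<odot> D (TT X)) X"
proof -
  let ?s' = "s (TT X) \<cdot> Tm (dual (mu X))"
  let ?e = "ev X \<cdot> (dual (eta X) \<otimes> Id X)"
  have binary_mu: "binary_of_unary (TT X) Y \<cdot> Tm (Id Y \<otimes> dual (mu X))
      = (Id (TT Y) \<otimes> ?s') \<cdot> t2 Y (D (TT X))"
  proof -
    have "binary_of_unary (TT X) Y \<cdot> Tm (Id Y \<otimes> dual (mu X))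
        = (Id (TT Y) \<otimes> s (TT X)) \<cdot> (Id (TT Y) \<otimes> Tm (dual (mu X))) \<cdot> t2 Y (D (TT X))"
      using t2_natR[of "dual (mu X)" Y] assms unfolding binary_of_unary_def by (simp add: typing comp_assoc)
    also have "\<dots> = (Id (TT Y) \<otimes> ?s') \<cdot> t2 Y (D (TT X))"
      using assms by (simp add: id_tensor_comp typing comp_assoc)
    finally show ?thesis .
  qed
  have "(Id (TT Y) \<otimes> ev (TT X)) \<cdot> ((binary_of_unary (TT X) Y \<cdot> Tm (Id Y \<otimes> dual (mu X))) \<otimes> Id (TT X)) \<cdot> t2 (Y \<odot> D (TT X)) X
     = (Id (TT Y) \<otimes> ev (TT X)) \<cdot> (Id (TT Y) \<otimes> ?s' \<otimes> Id (TT X)) \<cdot> (t2 Y (D (TT X)) \<otimes> Id (TT X)) \<cdot> t2 (Y \<odot> D (TT X)) X"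
    using assms by (simp add: binary_mu comp_tensor_id tensor_assoc typing comp_assoc)
  also have "\<dots> = (Id (TT Y) \<otimes> (ev (TT X) \<cdot> (?s' \<otimes> Id (TT X))))
      \<cdot> (Id (TT Y) \<otimes> t2 (D (TT X)) X) \<cdot> t2 Y (D (TT X) \<odot> X)"
    using assms by (simp add: interchange_pre t2_coassoc cat_id_left typing comp_assoc)
  also have "\<dots> = (Id (TT Y) \<otimes> (ev (TT X) \<cdot> (?s' \<otimes> Id (TT X)) \<cdot> t2 (D (TT X)) X)) \<cdot> t2 Y (D (TT X) \<odot> X)"
    using assms by (simp add: interchange_pre cat_id_left typing comp_assoc)
  also have "\<dots> = (Id (TT Y) \<otimes> (t0 \<cdot> Tm (ev X) \<cdot> Tm (dual (eta X) \<otimes> Id X))) \<cdot> t2 Y (D (TT X) \<odot> X)"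
    using assms by (simp add: s_ax1)
  also have "\<dots> = (Id (TT Y) \<otimes> t0) \<cdot> (Id (TT Y) \<otimes> Tm ?e) \<cdot> t2 Y (D (TT X) \<odot> X)"
    using assms by (simp add: id_tensor_comp T_comp typing comp_assoc)
  also have "\<dots> = (Id (TT Y) \<otimes> t0) \<cdot> t2 Y U \<cdot> Tm (Id Y \<otimes> ?e)"
    using t2_natR[of ?e Y] assms by (simp add: typing)
  also have "\<dots> = Tm (Id Y \<otimes> ?e)"
    using assms by (simp add: comp_extend[OF t0_counitR] cat_id_left typing)
  also have "\<dots> = Tm ((Id Y \<otimes> ev X) \<cdot> ((Id Y \<otimes> dual (eta X)) \<otimes> Id X))"
    using assms by (simp add: tensor_assoc interchange_rev cat_id_left typing)
  finally show ?thesis by simp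
qed

text \<open>Axiom (2): coassociativity and naturality of T2 isolate the right hand side of axiom 2
  of s in the second factor; T0 is then removed by counitality.\<close>

lemma binary_of_unary_ax2: assumes "ob X" "ob Y"
  shows "((Id (TT Y) \<otimes> eta X) \<otimes> dual (Id X)) \<cdot> (Id (TT Y) \<otimes> coev X) =
    (((Id (TT Y) \<otimes> mu X) \<cdot> t2 Y (TT X)) \<otimes> dual (Id X)) \<cdot> binary_of_unary X (Y \<odot> TT X) \<cdot> Tm (Id Y \<otimes> coev (TT X))"
proof -
  have "(((Id (TT Y) \<otimes> mu X) \<cdot> t2 Y (TT X)) \<otimes> dual (Id X))
      \<cdot> binary_of_unary X (Y \<odot> TT X) \<cdot> Tm (Id Y \<otimes> coev (TT X))
    = (((Id (TT Y) \<otimes> mu X) \<cdot> t2 Y (TT X)) \<otimes> s X) \<cdot> t2 (Y \<odot> TT X) (D (TT X)) \<cdot> Tm (Id Y \<otimes> coev (TT X))"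
    using assms unfolding binary_of_unary_def
      by (simp add: dual_id interchange_pre cat_id_left cat_id_right typing comp_assoc)
  also have "\<dots> = (Id (TT Y) \<otimes> mu X \<otimes> s X)
      \<cdot> (t2 Y (TT X) \<otimes> Id (TT (D (TT X)))) \<cdot> t2 (Y \<odot> TT X) (D (TT X)) \<cdot> Tm (Id Y \<otimes> coev (TT X))"
    using assms by (simp add: comp_tensor typing tensor_assoc comp_assoc)
  also have "\<dots> = (Id (TT Y) \<otimes> mu X \<otimes> s X)
      \<cdot> (Id (TT Y) \<otimes> t2 (TT X) (D (TT X))) \<cdot> t2 Y (TT X \<odot> D (TT X)) \<cdot> Tm (Id Y \<otimes> coev (TT X))"
    using assms by (simp add: comp_extend[OF t2_coassoc] typing comp_assoc)
  also have "\<dots> = (Id (TT Y) \<otimes> mu X \<otimes> s X)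
      \<cdot> (Id (TT Y) \<otimes> t2 (TT X) (D (TT X))) \<cdot> (Id (TT Y) \<otimes> Tm (coev (TT X))) \<cdot> t2 Y U"
    using t2_natR[of "coev (TT X)" Y] assms by (simp add: typing)
  also have "\<dots> = (Id (TT Y) \<otimes> ((mu X \<otimes> s X) \<cdot> t2 (TT X) (D (TT X)) \<cdot> Tm (coev (TT X)))) \<cdot> t2 Y U"
    using assms by (simp add: id_tensor_comp typing comp_assoc)
  also have "\<dots> = (Id (TT Y) \<otimes> ((eta X \<otimes> Id (D X)) \<cdot> coev X \<cdot> t0)) \<cdot> t2 Y U"
    using assms by (simp add: s_ax2)
  also have "\<dots> = (Id (TT Y) \<otimes> ((eta X \<otimes> Id (D X)) \<cdot> coev X))
      \<cdot> (Id (TT Y) \<otimes> t0) \<cdot> t2 Y U"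
    using assms by (simp add: id_tensor_comp typing comp_assoc)
  also have "\<dots> = (Id (TT Y) \<otimes> ((eta X \<otimes> Id (D X)) \<cdot> coev X))"
    using assms by (simp add: t0_counitR cat_id_right typing)
  also have "\<dots> = ((Id (TT Y) \<otimes> eta X) \<otimes> dual (Id X)) \<cdot> (Id (TT Y) \<otimes> coev X)"
    using assms by (simp add: dual_id tensor_assoc interchange_rev cat_id_left typing)
  finally show ?thesis by simp
qed

lemma binary_of_unary_is_antipode: "is_left_binary_antipode C T binary_of_unary"
  unfolding is_left_binary_antipode_def ihom_def ihomm_def wl_def wr_def hom_def
  using binary_of_unary_nat binary_of_unary_ax1 binary_of_unary_ax2 by (simp add: typing)

end

locale left_binary_antipode = left_autonomous_bimonad C T
  for C :: "('o, 'm) lacat" and T :: "('o, 'm) bimonad_data" +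
  fixes s :: "'o \<Rightarrow> 'o \<Rightarrow> 'm"
  assumes antipode: "is_left_binary_antipode C T s"
begin

lemma s_typing[typing]: "ob X \<Longrightarrow> ob Y \<Longrightarrow> arr (s X Y)"
  "ob X \<Longrightarrow> ob Y \<Longrightarrow> dm (s X Y) = TT (Y \<odot> D (TT X))"
  "ob X \<Longrightarrow> ob Y \<Longrightarrow> cd (s X Y) = TT Y \<odot> D X"
  using antipode unfolding is_left_binary_antipode_def hom_def ihom_def by auto
lemma s_nat: "arr f \<Longrightarrow> arr g \<Longrightarrow>
   s (dm f) (cd g) \<cdot> Tm (g \<otimes> dual (Tm f)) = (Tm g \<otimes> dual f) \<cdot> s (cd f) (dm g)"
  using antipode unfolding is_left_binary_antipode_def ihomm_def by auto
lemma s_ax1: "ob X \<Longrightarrow> ob Y \<Longrightarrow> Tm ((Id Y \<otimes> ev X) \<cdot> ((Id Y \<otimes> dual (eta X)) \<otimes> Id X)) =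
    (Id (TT Y) \<otimes> ev (TT X)) \<cdot> ((s (TT X) Y \<cdot> Tm (Id Y \<otimes> dual (mu X))) \<otimes> Id (TT X)) \<cdot>
      t2 (Y \<odot> D (TT X)) X"
  using antipode unfolding is_left_binary_antipode_def ihomm_def ihom_def wl_def wr_def by auto
lemma s_ax2: "ob X \<Longrightarrow> ob Y \<Longrightarrow> ((Id (TT Y) \<otimes> eta X) \<otimes> dual (Id X)) \<cdot> (Id (TT Y) \<otimes> coev X) =
    (((Id (TT Y) \<otimes> mu X) \<cdot> t2 Y (TT X)) \<otimes> dual (Id X)) \<cdot> s X (Y \<odot> TT X) \<cdot> Tm (Id Y \<otimes> coev (TT X))"
  using antipode unfolding is_left_binary_antipode_def ihomm_def ihom_def wl_def wr_def by auto

definition s_ev :: "'o \<Rightarrow> 'o \<Rightarrow> 'm" where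
  "s_ev X Y = uncur (TT Y) X (s X Y)"

lemma s_ev_typing[typing]: "ob X \<Longrightarrow> ob Y \<Longrightarrow> arr (s_ev X Y)"
  "ob X \<Longrightarrow> ob Y \<Longrightarrow> dm (s_ev X Y) = TT (Y \<odot> D (TT X)) \<odot> X"
  "ob X \<Longrightarrow> ob Y \<Longrightarrow> cd (s_ev X Y) = TT Y"
  unfolding s_ev_def by (simp_all add: typing)

lemma s_ev_ax1: assumes "ob X" "ob Y"
  shows "s_ev (TT X) Y \<cdot> (Tm (Id Y \<otimes> dual (mu X)) \<otimes> Id (TT X))
      \<cdot> t2 (Y \<odot> D (TT X)) X =
     Tm ((Id Y \<otimes> ev X) \<cdot> ((Id Y \<otimes> dual (eta X)) \<otimes> Id X))"
  using assms unfolding s_ev_def by (simp add: s_ax1 comp_tensor_id comp_assoc typing)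

lemma s_ev_ax2: assumes "ob A" "ob X"
  shows "fusion A X \<cdot> s_ev X (A \<odot> TT X)
      \<cdot> (Tm (Id A \<otimes> coev (TT X)) \<otimes> Id X) = Id (TT A) \<otimes> eta X"
proof -
  let ?k = "s X (A \<odot> TT X) \<cdot> Tm (Id A \<otimes> coev (TT X))"
  have ax2: "(fusion A X \<otimes> Id (D X)) \<cdot> ?k
      = ((Id (TT A) \<otimes> eta X) \<otimes> Id (D X)) \<cdot> (Id (TT A) \<otimes> coev X)"
    using s_ax2[of X A] assms by (simp add: dual_id fusion_def)
  have "fusion A X \<cdot> s_ev X (A \<odot> TT X) \<cdot> (Tm (Id A \<otimes> coev (TT X)) \<otimes> Id X) =
      fusion A X \<cdot> uncur (TT (A \<odot> TT X)) X ?k"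
    using assms unfolding s_ev_def by (simp add: uncur_precomp typing)
  also have "\<dots> = uncur (TT A \<odot> TT X) X ((fusion A X \<otimes> Id (D X)) \<cdot> ?k)"
    using uncur_postcomp[of ?k "fusion A X" X] assms by (simp add: typing)
  also have "\<dots> = uncur (TT A \<odot> TT X) X (((Id (TT A) \<otimes> eta X) \<otimes> Id (D X)) \<cdot> (Id (TT A) \<otimes> coev X))"
    by (simp only: ax2)
  also have "\<dots> = (Id (TT A) \<otimes> eta X) \<cdot> uncur (TT A \<odot> X) X (Id (TT A) \<otimes> coev X)"
    using uncur_postcomp[of "Id (TT A) \<otimes> coev X" "Id (TT A) \<otimes> eta X" X] assms by (simp add: typing)
  also have "\<dots> = Id (TT A) \<otimes> eta X"
    using assms by (simp add: uncur_coev cat_id_right typing)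
  finally show ?thesis .
qed

lemma s_ev_nat_left: assumes "arr f" "ob Y"
  shows "s_ev (dm f) Y \<cdot> (Tm (Id Y \<otimes> dual (Tm f)) \<otimes> Id (dm f)) =
    s_ev (cd f) Y \<cdot> (Id (TT (Y \<odot> D (TT (cd f)))) \<otimes> f)"
proof -
  have "s_ev (dm f) Y \<cdot> (Tm (Id Y \<otimes> dual (Tm f)) \<otimes> Id (dm f)) =
      uncur (TT Y) (dm f) (s (dm f) Y \<cdot> Tm (Id Y \<otimes> dual (Tm f)))"
    using assms unfolding s_ev_def by (simp add: uncur_precomp typing comp_assoc)
  also have "\<dots> = uncur (TT Y) (dm f) ((Id (TT Y) \<otimes> dual f) \<cdot> s (cd f) Y)"
    using s_nat[of f "Id Y"] assms by (simp add: T_id typing)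
  also have "\<dots> = s_ev (cd f) Y \<cdot> (Id (TT (Y \<odot> D (TT (cd f)))) \<otimes> f)"
    using assms unfolding s_ev_def by (simp add: uncur_dual typing)
  finally show ?thesis .
qed

lemma s_ev_nat_right: assumes "arr g" "ob X"
  shows "s_ev X (cd g) \<cdot> (Tm (g \<otimes> Id (D (TT X))) \<otimes> Id X) = Tm g \<cdot> s_ev X (dm g)"
proof -
  have "s_ev X (cd g) \<cdot> (Tm (g \<otimes> Id (D (TT X))) \<otimes> Id X) =
      uncur (TT (cd g)) X (s X (cd g) \<cdot> Tm (g \<otimes> Id (D (TT X))))"
    using assms unfolding s_ev_def by (simp add: uncur_precomp typing comp_assoc)
  also have "\<dots> = uncur (TT (cd g)) X ((Tm g \<otimes> Id (D X)) \<cdot> s X (dm g))"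
    using s_nat[of "Id X" g] assms by (simp add: T_id dual_id typing)
  also have "\<dots> = Tm g \<cdot> s_ev X (dm g)"
    using uncur_postcomp[of "s X (dm g)" "Tm g" X] assms unfolding s_ev_def by (simp add: typing)
  finally show ?thesis .
qed

definition antipode_fusion_inv :: "'o \<Rightarrow> 'o \<Rightarrow> 'm" where
  "antipode_fusion_inv A B = s_ev (TT B) (A \<odot> TT B) \<cdot>
     ((Tm (Id (A \<odot> TT B) \<otimes> dual (mu B)) \<cdot> Tm (Id A \<otimes> coev (TT B))) \<otimes> Id (TT B))"

lemma antipode_fusion_inv_typing[typing]: "ob A \<Longrightarrow> ob B \<Longrightarrow> arr (antipode_fusion_inv A B)"
  "ob A \<Longrightarrow> ob B \<Longrightarrow> dm (antipode_fusion_inv A B) = TT A \<odot> TT B"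
  "ob A \<Longrightarrow> ob B \<Longrightarrow> cd (antipode_fusion_inv A B) = TT (A \<odot> TT B)"
  unfolding antipode_fusion_inv_def by (simp_all add: typing)

text \<open>Moving the dualised multiplication across the coevaluation (coev_dual) and out of s_ev
  (naturality) gives a form in which axiom (2) applies directly.\<close>

lemma antipode_fusion_inv_alt: assumes "ob A" "ob B"
  shows "antipode_fusion_inv A B =
    Tm (Id A \<otimes> mu B) \<cdot> s_ev (TT B) (A \<odot> TT (TT B)) \<cdot> (Tm (Id A \<otimes> coev (TT (TT B))) \<otimes> Id (TT B))"
proof -
  have coev_mu: "(Id (TT B) \<otimes> dual (mu B)) \<cdot> coev (TT B)
      = (mu B \<otimes> Id (D (TT (TT B)))) \<cdot> coev (TT (TT B))"
    using coev_dual[of "mu B"] assms by (simp add: typing)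
  have "Tm (Id (A \<odot> TT B) \<otimes> dual (mu B)) \<cdot> Tm (Id A \<otimes> coev (TT B)) =
      Tm (Id A \<otimes> ((Id (TT B) \<otimes> dual (mu B)) \<cdot> coev (TT B)))"
    using assms by (simp add: T_comp[symmetric] id_tensor_comp tensor_id3 typing)
  also have "\<dots> = Tm (Id A \<otimes> mu B \<otimes> Id (D (TT (TT B))))
      \<cdot> Tm (Id A \<otimes> coev (TT (TT B)))"
    using assms by (simp add: coev_mu T_comp[symmetric] id_tensor_comp typing)
  finally have twisted_coev: "Tm (Id (A \<odot> TT B) \<otimes> dual (mu B)) \<cdot> Tm (Id A \<otimes> coev (TT B)) =
      Tm (Id A \<otimes> mu B \<otimes> Id (D (TT (TT B)))) \<cdot> Tm (Id A \<otimes> coev (TT (TT B)))" .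
  have "antipode_fusion_inv A B = s_ev (TT B) (A \<odot> TT B) \<cdot>
      (Tm ((Id A \<otimes> mu B) \<otimes> Id (D (TT (TT B)))) \<otimes> Id (TT B)) \<cdot> (Tm (Id A \<otimes> coev (TT (TT B))) \<otimes> Id (TT B))"
    using assms unfolding antipode_fusion_inv_def by (simp add: twisted_coev comp_tensor_id tensor_assoc typing)
  also have "\<dots> = Tm (Id A \<otimes> mu B) \<cdot> s_ev (TT B) (A \<odot> TT (TT B))
      \<cdot> (Tm (Id A \<otimes> coev (TT (TT B))) \<otimes> Id (TT B))"
    using s_ev_nat_right[of "Id A \<otimes> mu B" "TT B"] assms by (simp add: comp_extend typing)
  finally show ?thesis .
qed

text \<open>H \<cdot> H^{-1} = id, from axiom (2).\<close>

lemma fusion_right_inverse: assumes "ob A" "ob B"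
  shows "fusion A B \<cdot> antipode_fusion_inv A B = Id (TT A \<odot> TT B)"
proof -
  have "fusion A B \<cdot> antipode_fusion_inv A B = (Id (TT A) \<otimes> mu B) \<cdot> fusion A (TT B) \<cdot>
      s_ev (TT B) (A \<odot> TT (TT B)) \<cdot> (Tm (Id A \<otimes> coev (TT (TT B))) \<otimes> Id (TT B))"
    using assms by (simp add: antipode_fusion_inv_alt comp_extend[OF fusion_mu] typing comp_assoc)
  also have "\<dots> = (Id (TT A) \<otimes> mu B) \<cdot> (Id (TT A) \<otimes> eta (TT B))"
    using s_ev_ax2[of A "TT B"] assms by (simp add: typing comp_assoc)
  also have "\<dots> = Id (TT A \<odot> TT B)"
    using assms by (simp add: interchange_rev mu_eta_T cat_id_left tensor_id typing)
  finally show ?thesis .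
qed

text \<open>H^{-1} \<cdot> H = id, from axiom (1): naturality turns mu_B into mu_{TB}, after which
  axiom (1) and the unit law collapse the composite to T applied to a snake identity.\<close>

lemma fusion_left_inverse: assumes "ob A" "ob B"
  shows "antipode_fusion_inv A B \<cdot> fusion A B = Id (TT (A \<odot> TT B))"
proof -
  let ?Z = "A \<odot> TT B"
  let ?k = "(Id ?Z \<otimes> dual (mu B)) \<cdot> (Id A \<otimes> coev (TT B))"
  let ?K = "Tm (Id ?Z \<otimes> dual (mu B)) \<cdot> Tm (Id A \<otimes> coev (TT B))"
  have slide: "(?K \<otimes> Id (TT B)) \<cdot> (Id (TT A) \<otimes> mu B) =
      (Id (TT (?Z \<odot> D (TT (TT B)))) \<otimes> mu B) \<cdot> (?K \<otimes> Id (TT (TT B)))"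
    using tensor_commute[of ?K "mu B"] assms by (simp add: typing)
  have "Tm (Id ?Z \<otimes> dual (Tm (mu B))) \<cdot> ?K = Tm (Id ?Z \<otimes> dual (mu (TT B))) \<cdot> Tm ?k"
    using dual_mu_assoc[of ?Z B] assms by (simp add: T_comp[symmetric] typing comp_assoc[symmetric])
  then have mu: "(Tm (Id ?Z \<otimes> dual (Tm (mu B))) \<otimes> Id (TT (TT B)))
      \<cdot> (?K \<otimes> Id (TT (TT B))) =
      (Tm (Id ?Z \<otimes> dual (mu (TT B))) \<otimes> Id (TT (TT B))) \<cdot> (Tm ?k \<otimes> Id (TT (TT B)))"
    using assms by (simp add: comp_tensor_id[symmetric] typing)
  have eta: "(Id ?Z \<otimes> dual (eta (TT B))) \<cdot> ?k = Id A \<otimes> coev (TT B)"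
    using dual_mu_eta[of ?Z B] assms by (simp add: comp_assoc[symmetric] cat_id_left typing)
  have "antipode_fusion_inv A B \<cdot> fusion A B =
      s_ev (TT B) ?Z \<cdot> (?K \<otimes> Id (TT B)) \<cdot> (Id (TT A) \<otimes> mu B) \<cdot> t2 A (TT B)"
    using assms unfolding antipode_fusion_inv_def fusion_def by (simp add: comp_assoc typing)
  also have "\<dots> = s_ev (TT B) ?Z \<cdot> (Id (TT (?Z \<odot> D (TT (TT B)))) \<otimes> mu B) \<cdot>
      (?K \<otimes> Id (TT (TT B))) \<cdot> t2 A (TT B)"
    using assms by (simp add: comp_extend[OF slide] typing comp_assoc)
  also have "\<dots> = s_ev (TT (TT B)) ?Z
      \<cdot> (Tm (Id ?Z \<otimes> dual (Tm (mu B))) \<otimes> Id (TT (TT B))) \<cdot>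
      (?K \<otimes> Id (TT (TT B))) \<cdot> t2 A (TT B)"
    using s_ev_nat_left[of "mu B" ?Z] assms by (simp add: comp_extend typing)
  also have "\<dots> = s_ev (TT (TT B)) ?Z
      \<cdot> (Tm (Id ?Z \<otimes> dual (mu (TT B))) \<otimes> Id (TT (TT B))) \<cdot>
      (Tm ?k \<otimes> Id (TT (TT B))) \<cdot> t2 A (TT B)"
    using assms by (simp add: comp_extend[OF mu] typing comp_assoc)
  also have "\<dots> = s_ev (TT (TT B)) ?Z
      \<cdot> (Tm (Id ?Z \<otimes> dual (mu (TT B))) \<otimes> Id (TT (TT B))) \<cdot>
      t2 (?Z \<odot> D (TT (TT B))) (TT B) \<cdot> Tm (?k \<otimes> Id (TT B))"
    using t2_natL[of ?k "TT B"] assms by (simp add: typing)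
  also have "\<dots> = Tm ((Id ?Z \<otimes> ev (TT B)) \<cdot> ((Id ?Z \<otimes> dual (eta (TT B))) \<otimes> Id (TT B))) \<cdot>
      Tm (?k \<otimes> Id (TT B))"
    using s_ev_ax1[of "TT B" ?Z] assms by (simp add: comp_extend typing)
  also have "\<dots> = Tm ((Id ?Z \<otimes> ev (TT B)) \<cdot> (((Id ?Z \<otimes> dual (eta (TT B))) \<cdot> ?k) \<otimes> Id (TT B)))"
    using assms by (simp add: T_comp[symmetric] comp_tensor_id typing comp_assoc)
  also have "\<dots> = Tm ((Id ?Z \<otimes> ev (TT B)) \<cdot> ((Id A \<otimes> coev (TT B)) \<otimes> Id (TT B)))"
    by (simp only: eta)
  also have "\<dots> = Id (TT ?Z)"
    using uncur_coev[of A "TT B"] assms by (simp add: T_id typing)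
  finally show ?thesis .
qed

lemma left_hopf_of_binary: "left_hopf C T"
  unfolding left_hopf_def wl_def hom_def
  using fusion_right_inverse fusion_left_inverse antipode_fusion_inv_typing
  unfolding fusion_def by metis

end

locale left_hopf_bimonad = left_autonomous_bimonad C T
  for C :: "('o, 'm) lacat" and T :: "('o, 'm) bimonad_data" +
  assumes hopf: "left_hopf C T"
begin

definition fusion_inv :: "'o \<Rightarrow> 'o \<Rightarrow> 'm" where
  "fusion_inv A B = (SOME g. hom C g (TT A \<odot> TT B) (TT (A \<odot> TT B)) \<and>
     g \<cdot> fusion A B = Id (TT (A \<odot> TT B)) \<and> fusion A B \<cdot> g = Id (TT A \<odot> TT B))"

lemma fusion_inv_props: assumes "ob A" "ob B"
  shows "hom C (fusion_inv A B) (TT A \<odot> TT B) (TT (A \<odot> TT B)) \<and>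
    fusion_inv A B \<cdot> fusion A B = Id (TT (A \<odot> TT B)) \<and> fusion A B \<cdot> fusion_inv A B = Id (TT A \<odot> TT B)"
proof -
  have "\<exists>g. hom C g (TT A \<odot> TT B) (TT (A \<odot> TT B)) \<and>
      g \<cdot> fusion A B = Id (TT (A \<odot> TT B)) \<and> fusion A B \<cdot> g = Id (TT A \<odot> TT B)"
    using hopf assms unfolding left_hopf_def wl_def fusion_def by blast
  then show ?thesis unfolding fusion_inv_def by (rule someI_ex)
qed

lemma fusion_inv_typing[typing]: "ob A \<Longrightarrow> ob B \<Longrightarrow> arr (fusion_inv A B)"
  "ob A \<Longrightarrow> ob B \<Longrightarrow> dm (fusion_inv A B) = TT A \<odot> TT B"
  "ob A \<Longrightarrow> ob B \<Longrightarrow> cd (fusion_inv A B) = TT (A \<odot> TT B)"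
  using fusion_inv_props unfolding hom_def by blast+

lemma fusion_inv_left: "ob A \<Longrightarrow> ob B \<Longrightarrow> fusion_inv A B \<cdot> fusion A B = Id (TT (A \<odot> TT B))"
  using fusion_inv_props by blast
lemma fusion_inv_right: "ob A \<Longrightarrow> ob B \<Longrightarrow> fusion A B \<cdot> fusion_inv A B = Id (TT A \<odot> TT B)"
  using fusion_inv_props by blast

lemma fusion_inv_left_comp: assumes "ob A" "ob B" "arr y" "cd y = TT (A \<odot> TT B)"
  shows "fusion_inv A B \<cdot> fusion A B \<cdot> y = y"
  using comp_extend[OF fusion_inv_left[of A B] assms(3)] assms by (simp add: cat_id_left typing)
lemma fusion_inv_right_comp: assumes "ob A" "ob B" "arr y" "cd y = TT A \<odot> TT B"
  shows "fusion A B \<cdot> fusion_inv A B \<cdot> y = y"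
  using comp_extend[OF fusion_inv_right[of A B] assms(3)] assms by (simp add: cat_id_left typing)

lemma fusion_inv_nat_left: assumes "arr f" "ob B"
  shows "fusion_inv (cd f) B \<cdot> (Tm f \<otimes> Id (TT B))
      = Tm (f \<otimes> Id (TT B)) \<cdot> fusion_inv (dm f) B"
  using inverse_transport[of "fusion (cd f) B" "fusion_inv (cd f) B" "fusion (dm f) B" "fusion_inv (dm f) B"]
    fusion_nat_left[OF assms] assms by (simp add: fusion_inv_left fusion_inv_right typing)

lemma fusion_inv_nat_right: assumes "arr g" "ob A"
  shows "fusion_inv A (cd g) \<cdot> (Id (TT A) \<otimes> Tm g)
      = Tm (Id A \<otimes> Tm g) \<cdot> fusion_inv A (dm g)"
  using inverse_transport[of "fusion A (cd g)" "fusion_inv A (cd g)" "fusion A (dm g)" "fusion_inv A (dm g)"]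
    fusion_nat_right[OF assms] assms by (simp add: fusion_inv_left fusion_inv_right typing)

lemma fusion_inv_coassoc: assumes "ob A" "ob B" "ob Z"
  shows "(Id (TT A) \<otimes> fusion_inv B Z) \<cdot> (t2 A B \<otimes> Id (TT Z))
      = t2 A (B \<odot> TT Z) \<cdot> fusion_inv (A \<odot> B) Z"
  using inverse_transport[of "Id (TT A) \<otimes> fusion B Z" "Id (TT A) \<otimes> fusion_inv B Z"
      "fusion (A \<odot> B) Z" "fusion_inv (A \<odot> B) Z"]
    fusion_coassoc[OF assms] assms
  by (simp add: interchange_rev cat_id_left fusion_inv_left fusion_inv_right tensor_id typing)

lemma fusion_inv_t2: assumes "ob A" "ob B" shows "fusion_inv A B \<cdot> t2 A B = Tm (Id A \<otimes> eta B)"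
  using fusion_inv_left_comp[of A B "Tm (Id A \<otimes> eta B)"] fusion_eta[OF assms] assms by (simp add: typing)

lemma mu_fusion_inv_unit: assumes "ob A" shows "mu A \<cdot> fusion_inv U A = t0 \<otimes> Id (TT A)"
proof -
  have "mu A \<cdot> fusion_inv U A = (t0 \<otimes> Id (TT A)) \<cdot> fusion U A \<cdot> fusion_inv U A"
    using comp_extend[OF fusion_counit[OF assms], of "fusion_inv U A"] assms by (simp add: typing)
  also have "\<dots> = t0 \<otimes> Id (TT A)"
    using assms by (simp add: fusion_inv_right cat_id_right typing)
  finally show ?thesis .
qed

lemma fusion_inv_mu: assumes "ob A" "ob B"
  shows "Tm (Id A \<otimes> mu B) \<cdot> fusion_inv A (TT B)
      \<cdot> (Id (TT A) \<otimes> eta (TT B)) = fusion_inv A B"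
proof -
  let ?g = "Tm (Id A \<otimes> mu B) \<cdot> fusion_inv A (TT B) \<cdot> (Id (TT A) \<otimes> eta (TT B))"
  have "fusion A B \<cdot> ?g = (Id (TT A) \<otimes> mu B) \<cdot> fusion A (TT B)
      \<cdot> fusion_inv A (TT B) \<cdot> (Id (TT A) \<otimes> eta (TT B))"
    using assms by (simp add: comp_extend[OF fusion_mu] typing comp_assoc)
  also have "\<dots> = Id (TT A \<odot> TT B)"
    using assms by (simp add: fusion_inv_right_comp interchange_rev cat_id_left mu_eta_T tensor_id typing)
  finally have right: "fusion A B \<cdot> ?g = Id (TT A \<odot> TT B)" .
  have "?g = fusion_inv A B \<cdot> fusion A B \<cdot> ?g"
    using assms by (simp add: fusion_inv_left_comp typing)
  also have "\<dots> = fusion_inv A B" using assms by (simp add: right cat_id_right typing)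
  finally show ?thesis .
qed

definition sigma :: "'o \<Rightarrow> 'm" where
  "sigma X = t0 \<cdot> Tm (ev (TT X)) \<cdot> fusion_inv (D (TT X)) X \<cdot> (Id (TT (D (TT X))) \<otimes> eta X)"

definition unary_of_hopf :: "'o \<Rightarrow> 'm" where
  "unary_of_hopf X = cur (TT (D (TT X))) X (sigma X)"

lemma sigma_typing[typing]: "ob X \<Longrightarrow> arr (sigma X)"
  "ob X \<Longrightarrow> dm (sigma X) = TT (D (TT X)) \<odot> X" "ob X \<Longrightarrow> cd (sigma X) = U"
  unfolding sigma_def by (simp_all add: typing)
lemma unary_of_hopf_typing[typing]: "ob X \<Longrightarrow> arr (unary_of_hopf X)"
  "ob X \<Longrightarrow> dm (unary_of_hopf X) = TT (D (TT X))" "ob X \<Longrightarrow> cd (unary_of_hopf X) = D X"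
  unfolding unary_of_hopf_def by (simp_all add: typing)

lemma ev_unary_of_hopf: "ob X \<Longrightarrow> ev X \<cdot> (unary_of_hopf X \<otimes> Id X) = sigma X"
  using uncur_cur[of "sigma X" "TT (D (TT X))" X] unfolding unary_of_hopf_def by (simp add: typing tensor_unit)

text \<open>Dinaturality of sigma, from naturality of H^{-1} in both variables and of eta.\<close>

lemma sigma_nat: assumes "arr f"
  shows "sigma (dm f) \<cdot> (Tm (dual (Tm f)) \<otimes> Id (dm f))
      = sigma (cd f) \<cdot> (Id (TT (D (TT (cd f)))) \<otimes> f)"
proof -
  let ?X = "dm f" and ?Y = "cd f"
  have "sigma ?X \<cdot> (Tm (dual (Tm f)) \<otimes> Id ?X)
      = t0 \<cdot> Tm (ev (TT ?X)) \<cdot> fusion_inv (D (TT ?X)) ?X \<cdot> (Tm (dual (Tm f)) \<otimes> Id (TT ?X)) \<cdot> (Id (TT (D (TT ?Y))) \<otimes> eta ?X)"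
  proof -
    have "(Id (TT (D (TT ?X))) \<otimes> eta ?X) \<cdot> (Tm (dual (Tm f)) \<otimes> Id ?X)
        = (Tm (dual (Tm f)) \<otimes> Id (TT ?X)) \<cdot> (Id (TT (D (TT ?Y))) \<otimes> eta ?X)"
      using assms by (simp add: slide1 slide2 typing)
    then show ?thesis using assms unfolding sigma_def by (simp add: comp_assoc typing)
  qed
  also have "\<dots> = t0 \<cdot> Tm (ev (TT ?X)) \<cdot> Tm (dual (Tm f) \<otimes> Id (TT ?X))
      \<cdot> fusion_inv (D (TT ?Y)) ?X \<cdot> (Id (TT (D (TT ?Y))) \<otimes> eta ?X)"
    using fusion_inv_nat_left[of "dual (Tm f)" ?X] assms by (simp add: comp_extend typing)
  also have "\<dots> = t0 \<cdot> Tm (ev (TT ?Y)) \<cdot> Tm (Id (D (TT ?Y)) \<otimes> Tm f)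
      \<cdot> fusion_inv (D (TT ?Y)) ?X \<cdot> (Id (TT (D (TT ?Y))) \<otimes> eta ?X)"
  proof -
    have ev_Tf: "Tm (ev (TT ?X)) \<cdot> Tm (dual (Tm f) \<otimes> Id (TT ?X))
        = Tm (ev (TT ?Y)) \<cdot> Tm (Id (D (TT ?Y)) \<otimes> Tm f)"
      using ev_dual[of "Tm f"] assms by (simp add: T_comp[symmetric] typing)
    show ?thesis using assms by (simp add: comp_extend[OF ev_Tf] typing comp_assoc)
  qed
  also have "\<dots> = t0 \<cdot> Tm (ev (TT ?Y)) \<cdot> fusion_inv (D (TT ?Y)) ?Y
      \<cdot> (Id (TT (D (TT ?Y))) \<otimes> Tm f) \<cdot> (Id (TT (D (TT ?Y))) \<otimes> eta ?X)"
    using fusion_inv_nat_right[of f "D (TT ?Y)"] assms by (simp add: comp_extend typing)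
  also have "\<dots> = t0 \<cdot> Tm (ev (TT ?Y)) \<cdot> fusion_inv (D (TT ?Y)) ?Y
      \<cdot> (Id (TT (D (TT ?Y))) \<otimes> eta ?Y) \<cdot> (Id (TT (D (TT ?Y))) \<otimes> f)"
    using assms by (simp add: id_tensor_comp[symmetric] eta_nat typing)
  also have "\<dots> = sigma ?Y \<cdot> (Id (TT (D (TT ?Y))) \<otimes> f)"
    using assms unfolding sigma_def by (simp add: comp_assoc typing)
  finally show ?thesis .
qed

lemma unary_of_hopf_nat: assumes "arr f" shows "dual f \<cdot> unary_of_hopf (cd f) = unary_of_hopf (dm f) \<cdot> Tm (dual (Tm f))"
proof (rule uncur_inj[of _ _ "TT (D (TT (cd f)))" U "dm f"])
  have "uncur U (dm f) (dual f \<cdot> unary_of_hopf (cd f))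
      = uncur U (dm f) ((Id U \<otimes> dual f) \<cdot> unary_of_hopf (cd f))"
    using assms by (simp add: tensor_unit typing)
  also have "\<dots> = uncur U (cd f) (unary_of_hopf (cd f)) \<cdot> (Id (TT (D (TT (cd f)))) \<otimes> f)"
    using assms by (simp add: uncur_dual typing)
  also have "\<dots> = sigma (cd f) \<cdot> (Id (TT (D (TT (cd f)))) \<otimes> f)"
    using assms by (simp add: tensor_unit ev_unary_of_hopf typing)
  also have "\<dots> = sigma (dm f) \<cdot> (Tm (dual (Tm f)) \<otimes> Id (dm f))"
    using assms by (simp add: sigma_nat)
  also have "\<dots> = uncur U (dm f) (unary_of_hopf (dm f) \<cdot> Tm (dual (Tm f)))"
    using assms by (simp add: tensor_unit comp_tensor_id comp_extend[OF ev_unary_of_hopf] comp_assoc typing)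
  finally show "uncur U (dm f) (dual f \<cdot> unary_of_hopf (cd f))
      = uncur U (dm f) (unary_of_hopf (dm f) \<cdot> Tm (dual (Tm f)))" .
qed (use assms in \<open>simp_all add: typing\<close>)

text \<open>First axiom: the dual of mu is moved through H^{-1}, which is then absorbed using
  fusion_inv_mu and fusion_inv_t2.\<close>

lemma unary_of_hopf_ax1: assumes "ob X"
  shows "t0 \<cdot> Tm (ev X) \<cdot> Tm (dual (eta X) \<otimes> Id X) =
    ev (TT X) \<cdot> ((unary_of_hopf (TT X) \<cdot> Tm (dual (mu X))) \<otimes> Id (TT X)) \<cdot> t2 (D (TT X)) X"
proof -
  let ?dm = "dual (mu X)"
  have "ev (TT X) \<cdot> ((unary_of_hopf (TT X) \<cdot> Tm ?dm) \<otimes> Id (TT X)) \<cdot> t2 (D (TT X)) X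
      = sigma (TT X) \<cdot> (Tm ?dm \<otimes> Id (TT X)) \<cdot> t2 (D (TT X)) X"
    using assms by (simp add: comp_tensor_id comp_extend[OF ev_unary_of_hopf] typing comp_assoc)
  also have "\<dots> = t0 \<cdot> Tm (ev (TT (TT X))) \<cdot> fusion_inv (D (TT (TT X))) (TT X)
      \<cdot> (Tm ?dm \<otimes> Id (TT (TT X))) \<cdot> (Id (TT (D (TT X))) \<otimes> eta (TT X)) \<cdot> t2 (D (TT X)) X"
  proof -
    have eta_slide: "(Id (TT (D (TT (TT X)))) \<otimes> eta (TT X)) \<cdot> (Tm ?dm \<otimes> Id (TT X))
        = (Tm ?dm \<otimes> Id (TT (TT X))) \<cdot> (Id (TT (D (TT X))) \<otimes> eta (TT X))"
      using assms by (simp add: slide1 slide2 typing)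
    show ?thesis using assms unfolding sigma_def by (simp add: comp_extend[OF eta_slide] comp_assoc typing)
  qed
  also have "\<dots> = t0 \<cdot> Tm (ev (TT (TT X))) \<cdot> Tm (?dm \<otimes> Id (TT (TT X)))
      \<cdot> fusion_inv (D (TT X)) (TT X) \<cdot> (Id (TT (D (TT X))) \<otimes> eta (TT X)) \<cdot> t2 (D (TT X)) X"
    using fusion_inv_nat_left[of ?dm "TT X"] assms by (simp add: comp_extend typing)
  also have "\<dots> = t0 \<cdot> Tm (ev (TT X)) \<cdot> Tm (Id (D (TT X)) \<otimes> mu X)
      \<cdot> fusion_inv (D (TT X)) (TT X) \<cdot> (Id (TT (D (TT X))) \<otimes> eta (TT X)) \<cdot> t2 (D (TT X)) X"
  proof -
    have ev_mu: "Tm (ev (TT (TT X))) \<cdot> Tm (?dm \<otimes> Id (TT (TT X)))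
        = Tm (ev (TT X)) \<cdot> Tm (Id (D (TT X)) \<otimes> mu X)"
      using ev_dual[of "mu X"] assms by (simp add: T_comp[symmetric] typing)
    show ?thesis using assms by (simp add: comp_extend[OF ev_mu] typing comp_assoc)
  qed
  also have "\<dots> = t0 \<cdot> Tm (ev (TT X)) \<cdot> fusion_inv (D (TT X)) X \<cdot> t2 (D (TT X)) X"
    using assms by (simp add: comp_extend3[OF fusion_inv_mu] typing)
  also have "\<dots> = t0 \<cdot> Tm (ev (TT X)) \<cdot> Tm (Id (D (TT X)) \<otimes> eta X)"
    using assms by (simp add: fusion_inv_t2 typing)
  also have "\<dots> = t0 \<cdot> Tm (ev X) \<cdot> Tm (dual (eta X) \<otimes> Id X)"
    using ev_dual[of "eta X"] assms by (simp add: T_comp[symmetric] typing)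
  finally show ?thesis by simp
qed

text \<open>The key computation for the second antipode axiom: sigma applied after T2 \<cdot> T(coev)
  reduces, by coassociativity, naturality of H^{-1} and a snake identity, to H^{-1}_{1,X}.\<close>

lemma sigma_coev: assumes "ob X"
  shows "(Id (TT (TT X)) \<otimes> sigma X) \<cdot> ((t2 (TT X) (D (TT X)) \<cdot> Tm (coev (TT X))) \<otimes> Id X) =
    fusion_inv U X \<cdot> (Id (TT U) \<otimes> eta X)"
proof -
  let ?k = "t2 (TT X) (D (TT X)) \<cdot> Tm (coev (TT X))"
  have eta: "(Id (TT (TT X)) \<otimes> Id (TT (D (TT X))) \<otimes> eta X) \<cdot> (?k \<otimes> Id X) =
      (t2 (TT X) (D (TT X)) \<otimes> Id (TT X)) \<cdot> (Tm (coev (TT X)) \<otimes> Id (TT X)) \<cdot> (Id (TT U) \<otimes> eta X)"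
  proof -
    have "(Id (TT (TT X)) \<otimes> Id (TT (D (TT X))) \<otimes> eta X) \<cdot> (?k \<otimes> Id X)
        = ?k \<otimes> eta X"
      using assms by (simp add: tensor_id3 slide2 typing)
    also have "\<dots> = (?k \<otimes> Id (TT X)) \<cdot> (Id (TT U) \<otimes> eta X)"
      using assms by (simp add: slide1 typing)
    finally show ?thesis using assms by (simp add: comp_tensor_id comp_assoc typing)
  qed
  have coev_nat: "fusion_inv (TT X \<odot> D (TT X)) X \<cdot> (Tm (coev (TT X)) \<otimes> Id (TT X)) =
      Tm (coev (TT X) \<otimes> Id (TT X)) \<cdot> fusion_inv U X"
    using fusion_inv_nat_left[of "coev (TT X)" X] assms by (simp add: typing)
  have "Id (TT (TT X)) \<otimes> sigma X = (Id (TT (TT X)) \<otimes> t0)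
      \<cdot> (Id (TT (TT X)) \<otimes> Tm (ev (TT X))) \<cdot>
      (Id (TT (TT X)) \<otimes> fusion_inv (D (TT X)) X) \<cdot> (Id (TT (TT X)) \<otimes> Id (TT (D (TT X))) \<otimes> eta X)"
    using assms unfolding sigma_def by (simp add: id_tensor_comp comp_assoc tensor_id3 typing)
  then have "(Id (TT (TT X)) \<otimes> sigma X) \<cdot> (?k \<otimes> Id X) =
      (Id (TT (TT X)) \<otimes> t0) \<cdot> (Id (TT (TT X)) \<otimes> Tm (ev (TT X))) \<cdot> (Id (TT (TT X)) \<otimes> fusion_inv (D (TT X)) X) \<cdot>
      (t2 (TT X) (D (TT X)) \<otimes> Id (TT X)) \<cdot> (Tm (coev (TT X)) \<otimes> Id (TT X)) \<cdot> (Id (TT U) \<otimes> eta X)"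
    using assms eta by (simp add: comp_assoc typing)
  also have "\<dots> = (Id (TT (TT X)) \<otimes> t0) \<cdot> (Id (TT (TT X)) \<otimes> Tm (ev (TT X))) \<cdot>
      t2 (TT X) (D (TT X) \<odot> TT X) \<cdot> fusion_inv (TT X \<odot> D (TT X)) X \<cdot>
      (Tm (coev (TT X)) \<otimes> Id (TT X)) \<cdot> (Id (TT U) \<otimes> eta X)"
    using fusion_inv_coassoc[of "TT X" "D (TT X)" X] assms by (simp add: comp_extend typing)
  also have "\<dots> = (Id (TT (TT X)) \<otimes> t0) \<cdot> t2 (TT X) U
      \<cdot> Tm (Id (TT X) \<otimes> ev (TT X)) \<cdot>
      fusion_inv (TT X \<odot> D (TT X)) X \<cdot> (Tm (coev (TT X)) \<otimes> Id (TT X)) \<cdot> (Id (TT U) \<otimes> eta X)"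
    using t2_natR[of "ev (TT X)" "TT X"] assms by (simp add: comp_extend typing)
  also have "\<dots> = Tm (Id (TT X) \<otimes> ev (TT X))
      \<cdot> Tm (coev (TT X) \<otimes> Id (TT X)) \<cdot> fusion_inv U X \<cdot>
      (Id (TT U) \<otimes> eta X)"
    using assms by (simp add: comp_extend[OF coev_nat] comp_extend[OF t0_counitR] cat_id_left comp_assoc typing)
  also have "\<dots> = fusion_inv U X \<cdot> (Id (TT U) \<otimes> eta X)"
    using assms by (simp add: comp_extend[OF T_comp[symmetric]] zig T_id cat_id_left typing)
  finally show ?thesis .
qed

text \<open>Second axiom, checked after uncurrying: both sides become eta_X \<cdot> (t0 \<odot> X).\<close>

lemma unary_of_hopf_ax2: assumes "ob X"
  shows "(eta X \<otimes> Id (D X)) \<cdot> coev X \<cdot> t0 =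
    (mu X \<otimes> unary_of_hopf X) \<cdot> t2 (TT X) (D (TT X)) \<cdot> Tm (coev (TT X))"
proof (rule uncur_inj[of _ _ "TT U" "TT X" X])
  let ?k = "t2 (TT X) (D (TT X)) \<cdot> Tm (coev (TT X))"
  have "uncur (TT X) X ((eta X \<otimes> Id (D X)) \<cdot> coev X \<cdot> t0)
      = eta X \<cdot> uncur X X (coev X \<cdot> t0)"
    using uncur_postcomp[of "coev X \<cdot> t0" "eta X" X] assms by (simp add: typing)
  also have "\<dots> = eta X \<cdot> (t0 \<otimes> Id X)"
    using assms by (simp add: uncur_precomp zig typing cat_id_left)
  finally have lhs: "uncur (TT X) X ((eta X \<otimes> Id (D X)) \<cdot> coev X \<cdot> t0)
      = eta X \<cdot> (t0 \<otimes> Id X)" .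
  have "uncur (TT X) X ((mu X \<otimes> unary_of_hopf X) \<cdot> ?k) =
      uncur (TT X) X ((mu X \<otimes> Id (D X)) \<cdot> (Id (TT (TT X)) \<otimes> unary_of_hopf X) \<cdot> ?k)"
    using assms by (simp add: slide1 typing comp_assoc[symmetric])
  also have "\<dots> = mu X \<cdot> uncur (TT (TT X)) X ((Id (TT (TT X)) \<otimes> unary_of_hopf X) \<cdot> ?k)"
    using uncur_postcomp[of "(Id (TT (TT X)) \<otimes> unary_of_hopf X) \<cdot> ?k" "mu X" X] assms
      by (simp add: typing)
  also have "\<dots> = mu X \<cdot> (Id (TT (TT X)) \<otimes> sigma X) \<cdot> (?k \<otimes> Id X)"
  proof -
    have "uncur (TT (TT X)) X (Id (TT (TT X)) \<otimes> unary_of_hopf X) = Id (TT (TT X)) \<otimes> sigma X"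
      using assms by (simp add: tensor_assoc interchange_rev cat_id_left ev_unary_of_hopf typing)
    then show ?thesis using assms by (simp add: uncur_precomp typing)
  qed
  also have "\<dots> = mu X \<cdot> fusion_inv U X \<cdot> (Id (TT U) \<otimes> eta X)"
    using assms by (simp add: sigma_coev)
  also have "\<dots> = (t0 \<otimes> Id (TT X)) \<cdot> (Id (TT U) \<otimes> eta X)"
    using assms by (simp add: comp_extend[OF mu_fusion_inv_unit] typing)
  also have "\<dots> = eta X \<cdot> (t0 \<otimes> Id X)"
    using assms slide1[of t0 "eta X" "TT X" "TT U"] slide2[of t0 "eta X" U X]
    by (simp add: tensor_unit typing)
  finally show "uncur (TT X) X ((eta X \<otimes> Id (D X)) \<cdot> coev X \<cdot> t0) =
      uncur (TT X) X ((mu X \<otimes> unary_of_hopf X) \<cdot> ?k)" using lhs by simp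
qed (use assms in \<open>simp_all add: typing\<close>)

lemma unary_of_hopf_is_antipode: "is_left_unary_antipode C T unary_of_hopf"
  unfolding is_left_unary_antipode_def wr_def hom_def
  using unary_of_hopf_nat unary_of_hopf_ax1 unary_of_hopf_ax2 by (simp add: typing)

end

lemma (in left_autonomous_bimonad) binary_antipode_if_unary:
  assumes "has_left_unary_antipode C T" shows "has_left_binary_antipode C T"
proof -
  obtain s where "is_left_unary_antipode C T s"
    using assms unfolding has_left_unary_antipode_def by blast
  then interpret left_unary_antipode C T s by unfold_locales
  show ?thesis unfolding has_left_binary_antipode_def using binary_of_unary_is_antipode by blast
qed

lemma (in left_autonomous_bimonad) left_hopf_if_binary_antipode:
  assumes "has_left_binary_antipode C T" shows "left_hopf C T"
proof -
  obtain s where "is_left_binary_antipode C T s"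
    using assms unfolding has_left_binary_antipode_def by blast
  then interpret left_binary_antipode C T s by unfold_locales
  show ?thesis by (rule left_hopf_of_binary)
qed

lemma (in left_autonomous_bimonad) unary_antipode_if_left_hopf:
  assumes "left_hopf C T" shows "has_left_unary_antipode C T"
proof -
  interpret left_hopf_bimonad C T using assms by unfold_locales
  show ?thesis unfolding has_left_unary_antipode_def using unary_of_hopf_is_antipode by blast
qed

theorem mainTheorem8:
  fixes C :: "('o, 'm) lacat" and T :: "('o, 'm) bimonad_data"
  assumes "left_autonomous C" and "bimonad C T"
  shows "(has_left_unary_antipode C T \<longleftrightarrow> has_left_binary_antipode C T) \<and>
         (has_left_binary_antipode C T \<longleftrightarrow> left_hopf C T)"
proof -
  interpret left_autonomous_bimonad C T using assms by unfold_locales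
  show ?thesis
    using binary_antipode_if_unary left_hopf_if_binary_antipode unary_antipode_if_left_hopf by blast
qed

end
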